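(* Let $\Phi$ be the one-hidden-layer objective and $G^\Phi$ the associated map. Set $\rho_x=\max_{i\in[n]}\|x^i\|_{p_u'}$, $C_w=\rho_w\Psi^\alpha_{p_w',p_u}(\mathbf{1},\rho_u\rho_x)$ and $C_u=\rho_w\Psi^\alpha_{p_w',p_u}(\alpha,\rho_u\rho_x)$. Let $$A=2\,\mathrm{diag}(p_w'-1,\dots,p_w'-1,p_u'-1)\begin{pmatrix}2C_w\mathbf{1}\mathbf{1}^T & (2C_u+\|\alpha\|_\infty)\mathbf{1}\\ (2C_w+1)\mathbf{1}^T & 2C_u+\|\alpha\|_\infty-1\end{pmatrix}\in\mathbb{R}^{(K+1)\times(K+1)},$$ with $\mathbf{1}\in\mathbb{R}^K$ the all-ones vector. Then for $F=G^\Phi$, for all $i,k\in[K]$, $j,a\in[n_1]$, $b\in[d]$ and $(w,u)\in B_{++}$: $$\langle|\nabla_{w_k}F_{w_{i,j}}|,w_k\rangle\le A_{i,k}F_{w_{i,j}},\ \langle|\nabla_u F_{w_{i,j}}|,u\rangle\le A_{i,K+1}F_{w_{i,j}},\ \langle|\nabla_{w_k}F_{u_{ab}}|,w_k\rangle\le A_{K+1,k}F_{u_{ab}},\ \langle|\nabla_u F_{u_{ab}}|,u\rangle\le A_{K+1,K+1}F_{u_{ab}}.$$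
   Context: Setting: data $(x^i,y_i)\in\mathbb{R}^d_+\times[K]$, $i\in[n]$; $w\in\mathbb{R}^{K\times n_1}_+$ with rows $w_1,\dots,w_K$, $u\in\mathbb{R}^{n_1\times d}_+$; $\alpha\in\mathbb{R}^{n_1}$ with $\alpha_l\ge1$; $f_r(w,u)(x)=\sum_{l=1}^{n_1}w_{r,l}(\sum_{m=1}^d u_{lm}x_m)^{\alpha_l}$; $L(y,f(x))=-f_y(x)+\log\sum_{j}e^{f_j(x)}$; for $\epsilon>0$, $\Phi(w,u)=\frac1n\sum_i[-L(y_i,f(w,u)(x^i))+\sum_r f_r(w,u)(x^i)]+\epsilon(\sum_{r,l}w_{r,l}+\sum_{l,m}u_{lm})$. Given $p_w,p_u\in(1,\infty)$, $\rho_w,\rho_u>0$: $B_{++}=\{(w,u)\in\mathbb{R}^{K\times n_1}_{++}\times\mathbb{R}^{n_1\times d}_{++}:\|u\|_{p_u}\le\rho_u,\ \|w_i\|_{p_w}\le\rho_w\ \forall i\}$ (entrywise norms). $p'=p/(p-1)$, $\psi_p(z)=\operatorname{sign}(z)|z|^{p-1}$ componentwise, and $G^{\Phi}(w,u)=\big(\tfrac{\rho_w\psi_{p_w'}(\nabla_{w_1}\Phi)}{\|\psi_{p_w'}(\nabla_{w_1}\Phi)\|_{p_w}},\dots,\tfrac{\rho_w\psi_{p_w'}(\nabla_{w_K}\Phi)}{\|\psi_{p_w'}(\nabla_{w_K}\Phi)\|_{p_w}},\tfrac{\rho_u\psi_{p_u'}(\nabla_u\Phi)}{\|\psi_{p_u'}(\nabla_u\Phi)\|_{p_u}}\big)(w,u)$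 with components $F_{w_{i,j}},F_{u_{ab}}$. $\Psi^\alpha_{p,q}(\delta,t)=\big([\sum_{l\in J}(\delta_lt^{\alpha_l})^{pq/(q-\bar\alpha p)}]^{1-\bar\alpha p/q}+\max_{j\in J^c}(\delta_jt^{\alpha_j})^p\big)^{1/p}$ with $J=\{l:\alpha_lp<q\}$, $J^c=\{l:\alpha_lp\ge q\}$, $\bar\alpha=\min_{l\in J}\alpha_l$, empty sums/maxima $=0$; $\mathbf{1}$ in $\Psi^\alpha(\mathbf{1},\cdot)$ is the all-ones vector of $\mathbb{R}^{n_1}$. $|\cdot|$ entrywise absolute value, $\langle\cdot,\cdot\rangle$ Frobenius inner product. *)

theory Defs
  imports "HOL-Analysis.Analysis"
begin

text \<open>Conventions: all indices are 0-based. Classes r < K, hidden units l < n1,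
 input coordinates m < d, samples i < n.  Weights are w :: nat => nat => real
 (w r l = w_{r,l}), u :: nat => nat => real (u l m = u_{lm}); data x i m = x^i_m,
 labels y i.\<close>

definition hconj :: "real \<Rightarrow> real" where
  "hconj p = p / (p - 1)"

definition psi :: "real \<Rightarrow> real \<Rightarrow> real" where
  "psi p z = sgn z * \<bar>z\<bar> powr (p - 1)"

definition fnet :: "nat \<Rightarrow> nat \<Rightarrow> (nat \<Rightarrow> real) \<Rightarrow> (nat \<Rightarrow> nat \<Rightarrow> real)
    \<Rightarrow> (nat \<Rightarrow> nat \<Rightarrow> real) \<Rightarrow> (nat \<Rightarrow> real) \<Rightarrow> nat \<Rightarrow> real" where
  "fnet n1 d \<alpha> w u xv r = (\<Sum>l<n1. w r l * (\<Sum>m<d. u l m * xv m) powr \<alpha> l)"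

definition xent :: "nat \<Rightarrow> nat \<Rightarrow> (nat \<Rightarrow> real) \<Rightarrow> real" where
  "xent K yy fv = - fv yy + ln (\<Sum>j<K. exp (fv j))"

definition PhiObj :: "nat \<Rightarrow> nat \<Rightarrow> nat \<Rightarrow> nat \<Rightarrow> (nat \<Rightarrow> nat \<Rightarrow> real) \<Rightarrow> (nat \<Rightarrow> nat)
    \<Rightarrow> (nat \<Rightarrow> real) \<Rightarrow> real \<Rightarrow> (nat \<Rightarrow> nat \<Rightarrow> real) \<Rightarrow> (nat \<Rightarrow> nat \<Rightarrow> real) \<Rightarrow> real" where
  "PhiObj K n1 d n x y \<alpha> \<epsilon> w u =
     (1 / real n) * (\<Sum>i<n. - xent K (y i) (fnet n1 d \<alpha> w u (x i))
                              + (\<Sum>r<K. fnet n1 d \<alpha> w u (x i) r))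
     + \<epsilon> * ((\<Sum>r<K. \<Sum>l<n1. w r l) + (\<Sum>l<n1. \<Sum>m<d. u l m))"

definition dW :: "((nat \<Rightarrow> nat \<Rightarrow> real) \<Rightarrow> (nat \<Rightarrow> nat \<Rightarrow> real) \<Rightarrow> real)
    \<Rightarrow> (nat \<Rightarrow> nat \<Rightarrow> real) \<Rightarrow> (nat \<Rightarrow> nat \<Rightarrow> real) \<Rightarrow> nat \<Rightarrow> nat \<Rightarrow> real" where
  "dW F w u r l = deriv (\<lambda>t. F (w(r := (w r)(l := t))) u) (w r l)"

definition dU :: "((nat \<Rightarrow> nat \<Rightarrow> real) \<Rightarrow> (nat \<Rightarrow> nat \<Rightarrow> real) \<Rightarrow> real)
    \<Rightarrow> (nat \<Rightarrow> nat \<Rightarrow> real) \<Rightarrow> (nat \<Rightarrow> nat \<Rightarrow> real) \<Rightarrow> nat \<Rightarrow> nat \<Rightarrow> real" where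
  "dU F w u a b = deriv (\<lambda>t. F w (u(a := (u a)(b := t)))) (u a b)"

definition GW :: "((nat \<Rightarrow> nat \<Rightarrow> real) \<Rightarrow> (nat \<Rightarrow> nat \<Rightarrow> real) \<Rightarrow> real) \<Rightarrow> nat
    \<Rightarrow> real \<Rightarrow> real \<Rightarrow> nat \<Rightarrow> nat \<Rightarrow> (nat \<Rightarrow> nat \<Rightarrow> real) \<Rightarrow> (nat \<Rightarrow> nat \<Rightarrow> real) \<Rightarrow> real" where
  "GW F n1 \<rho>w pw i j w u =
     \<rho>w * psi (hconj pw) (dW F w u i j)
       / (\<Sum>l<n1. \<bar>psi (hconj pw) (dW F w u i l)\<bar> powr pw) powr (1 / pw)"

definition GU :: "((nat \<Rightarrow> nat \<Rightarrow> real) \<Rightarrow> (nat \<Rightarrow> nat \<Rightarrow> real) \<Rightarrow> real) \<Rightarrow> nat \<Rightarrow> nat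
    \<Rightarrow> real \<Rightarrow> real \<Rightarrow> nat \<Rightarrow> nat \<Rightarrow> (nat \<Rightarrow> nat \<Rightarrow> real) \<Rightarrow> (nat \<Rightarrow> nat \<Rightarrow> real) \<Rightarrow> real" where
  "GU F n1 d \<rho>u pu a b w u =
     \<rho>u * psi (hconj pu) (dU F w u a b)
       / (\<Sum>l<n1. \<Sum>m<d. \<bar>psi (hconj pu) (dU F w u l m)\<bar> powr pu) powr (1 / pu)"

definition Bpp :: "nat \<Rightarrow> nat \<Rightarrow> nat \<Rightarrow> real \<Rightarrow> real \<Rightarrow> real \<Rightarrow> real
    \<Rightarrow> ((nat \<Rightarrow> nat \<Rightarrow> real) \<times> (nat \<Rightarrow> nat \<Rightarrow> real)) set" where
  "Bpp K n1 d pw pu \<rho>w \<rho>u = {(w, u).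
     (\<forall>r<K. \<forall>l<n1. 0 < w r l) \<and> (\<forall>l<n1. \<forall>m<d. 0 < u l m) \<and>
     (\<Sum>l<n1. \<Sum>m<d. \<bar>u l m\<bar> powr pu) powr (1 / pu) \<le> \<rho>u \<and>
     (\<forall>r<K. (\<Sum>l<n1. \<bar>w r l\<bar> powr pw) powr (1 / pw) \<le> \<rho>w)}"

definition PsiA :: "nat \<Rightarrow> (nat \<Rightarrow> real) \<Rightarrow> real \<Rightarrow> real \<Rightarrow> (nat \<Rightarrow> real) \<Rightarrow> real \<Rightarrow> real" where
  "PsiA n1 \<alpha> p q \<delta> t =
    (let J = {l. l < n1 \<and> \<alpha> l * p < q};
         Jc = {l. l < n1 \<and> q \<le> \<alpha> l * p};
         ab = Min (\<alpha> ` J)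
     in ((\<Sum>l\<in>J. (\<delta> l * t powr \<alpha> l) powr (p * q / (q - ab * p))) powr (1 - ab * p / q)
         + (if Jc = {} then 0 else Max ((\<lambda>j. (\<delta> j * t powr \<alpha> j) powr p) ` Jc))) powr (1 / p))"

definition rhoX :: "nat \<Rightarrow> nat \<Rightarrow> (nat \<Rightarrow> nat \<Rightarrow> real) \<Rightarrow> real \<Rightarrow> real" where
  "rhoX n d x pu = Max ((\<lambda>i. (\<Sum>m<d. \<bar>x i m\<bar> powr hconj pu) powr (1 / hconj pu)) ` {..<n})"

text \<open>The matrix A, indices 0..K (index K is the last row/column, i.e. K+1 in the paper).\<close>
definition Amat :: "nat \<Rightarrow> real \<Rightarrow> real \<Rightarrow> real \<Rightarrow> real \<Rightarrow> real \<Rightarrow> nat \<Rightarrow> nat \<Rightarrow> real" where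
  "Amat K pw pu Cw Cu an i k =
     2 * (if i < K then hconj pw - 1 else hconj pu - 1) *
     (if i < K \<and> k < K then 2 * Cw
      else if i < K then 2 * Cu + an
      else if k < K then 2 * Cw + 1
      else 2 * Cu + an - 1)"

end

theory Submission
  imports Defs
begin

text \<open>
  On a positive block z, a component of G^\<Phi> is \<rho> z_j^{q-1} / (\<Sigma>_l z_l^q)^{1/p} with q = p',
  whose logarithmic derivative is (q - 1)(z_j'/z_j - \<Sigma>_l \<pi>_l z_l'/z_l) for the probability
  weights \<pi>_l = z_l^q / \<Sigma> z^q. Hence the weighted sum of the absolute partial derivatives of
  the component is at most 2 (q - 1) B times the component, as soon as every entry z_l of the
  gradient of \<Phi> satisfies the analogous bound \<Sigma>_c |\<partial>_c z_l| v_c \<le> B z_l.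
  The gradient entries are \<epsilon> plus means of products c P, where c = 1 + \<delta>_{r,y} - softmax_r \<ge> 1 - softmax_r.
  The derivative of the softmax weight costs at most 2 (1 - softmax_r) times the weighted size of
  the logit derivatives, which Hoelder's inequality bounds by C_w (direction w) or C_u (direction u);
  the derivative of P costs 0, 1, \<alpha>_l \<le> \<parallel>\<alpha>\<parallel>_\<infinity> or \<alpha>_a - 1 times P, by Euler's identity
  for the homogeneous activations.
\<close>

section \<open>Hoelder's inequality\<close>

lemma hconj_gt_1: "1 < p \<Longrightarrow> 1 < hconj p"
  by (simp add: hconj_def)

lemma inverse_add_inverse_hconj: "1 < p \<Longrightarrow> 1 / p + 1 / hconj p = 1"
  by (simp add: hconj_def field_simps)

lemma hconj_div: "1 < p \<Longrightarrow> hconj p / p = hconj p - 1"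
  by (simp add: hconj_def field_simps)

lemma Holder_inequality_sum:
  fixes a b :: "'i \<Rightarrow> real"
  assumes fin: "finite I" and p: "1 < p" and q: "1 < q" and pq: "1/p + 1/q = 1"
  shows "(\<Sum>i\<in>I. a i * b i) \<le> (\<Sum>i\<in>I. \<bar>a i\<bar> powr p) powr (1/p) * (\<Sum>i\<in>I. \<bar>b i\<bar> powr q) powr (1/q)"
proof -
  define SA where "SA = (\<Sum>i\<in>I. \<bar>a i\<bar> powr p)"
  define SB where "SB = (\<Sum>i\<in>I. \<bar>b i\<bar> powr q)"
  have "(\<Sum>i\<in>I. a i * b i) \<le> (\<Sum>i\<in>I. \<bar>a i\<bar> * \<bar>b i\<bar>)"
    by (intro sum_mono) (simp flip: abs_mult)
  also have "\<dots> \<le> SA powr (1/p) * SB powr (1/q)"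
  proof (cases "SA = 0 \<or> SB = 0")
    case True
    then have "(\<forall>i\<in>I. a i = 0) \<or> (\<forall>i\<in>I. b i = 0)"
      unfolding SA_def SB_def using fin by (subst (asm) sum_nonneg_eq_0_iff; auto)+
    then show ?thesis by auto
  next
    case False
    then have SA: "0 < SA" and SB: "0 < SB"
      unfolding SA_def SB_def by (simp_all add: sum_nonneg less_le)
    define A where "A = SA powr (1/p)"
    define B where "B = SB powr (1/q)"
    have A: "0 < A" "A powr p = SA" unfolding A_def using SA p by (auto simp: powr_powr)
    have B: "0 < B" "B powr q = SB" unfolding B_def using SB q by (auto simp: powr_powr)
    have "(\<Sum>i\<in>I. \<bar>a i\<bar> / A * (\<bar>b i\<bar> / B)) \<le> (\<Sum>i\<in>I. (\<bar>a i\<bar> / A) powr p / p + (\<bar>b i\<bar> / B) powr q / q)"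
      by (intro sum_mono Youngs_inequality) (use p q pq A B in auto)
    also have "\<dots> = (\<Sum>i\<in>I. \<bar>a i\<bar> powr p) / SA / p + (\<Sum>i\<in>I. \<bar>b i\<bar> powr q) / SB / q"
      using A B by (simp add: sum.distrib powr_divide sum_divide_distrib)
    also have "\<dots> = 1" using SA SB pq by (simp add: SA_def[symmetric] SB_def[symmetric])
    finally have "(\<Sum>i\<in>I. \<bar>a i\<bar> * \<bar>b i\<bar>) / (A * B) \<le> 1"
      by (simp add: sum_divide_distrib mult.commute mult.left_commute)
    then show ?thesis using A B by (simp add: divide_le_eq A_def B_def)
  qed
  finally show ?thesis unfolding SA_def SB_def .
qed

section \<open>The dual map and its derivative\<close>

definition dual_map :: "real \<Rightarrow> real \<Rightarrow> 'i set \<Rightarrow> ('i \<Rightarrow> real) \<Rightarrow> 'i \<Rightarrow> real" where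
  "dual_map \<rho> p I g j = \<rho> * psi (hconj p) (g j) / (\<Sum>l\<in>I. \<bar>psi (hconj p) (g l)\<bar> powr p) powr (1/p)"

lemma dual_map_nonneg: "0 \<le> \<rho> \<Longrightarrow> 0 \<le> g j \<Longrightarrow> 0 \<le> dual_map \<rho> p I g j"
  by (simp add: dual_map_def psi_def)

lemma dual_map_pos_eq:
  assumes "finite I" "j \<in> I" "1 < p" "\<And>l. l \<in> I \<Longrightarrow> 0 < g l"
  shows "dual_map \<rho> p I g j
    = \<rho> * exp ((hconj p - 1) * ln (g j) - 1/p * ln (\<Sum>l\<in>I. exp (hconj p * ln (g l))))"
proof -
  define q where "q = hconj p"
  have qp: "(q - 1) * p = q" using assms(3) by (simp add: q_def hconj_def field_simps)
  have psi: "psi q (g l) = exp ((q - 1) * ln (g l))" if "l \<in> I" for l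
    using assms(4)[OF that] by (simp add: psi_def powr_def)
  have "(\<Sum>l\<in>I. \<bar>psi q (g l)\<bar> powr p) = (\<Sum>l\<in>I. exp (q * ln (g l)))"
    using qp by (intro sum.cong) (auto simp: psi powr_def mult.commute)
  moreover have "0 < (\<Sum>l\<in>I. exp (q * ln (g l)))"
    using assms(1,2) by (intro sum_pos) auto
  ultimately show ?thesis
    using psi[OF assms(2)] by (simp add: dual_map_def q_def[symmetric] powr_def exp_diff)
qed

lemma eventually_all_pos_nhds:
  fixes g :: "'i \<Rightarrow> real \<Rightarrow> real"
  assumes "finite I" and "\<And>l. l \<in> I \<Longrightarrow> 0 < g l x" and "\<And>l. l \<in> I \<Longrightarrow> isCont (g l) x"
  shows "\<forall>\<^sub>F t in nhds x. \<forall>l\<in>I. 0 < g l t"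
  using assms(1)
proof (rule eventually_ball_finite, intro ballI)
  fix l assume l: "l \<in> I"
  show "\<forall>\<^sub>F t in nhds x. 0 < g l t"
    using assms(2,3)[OF l] by (simp add: continuous_at tendsto_at_iff_tendsto_nhds order_tendstoD)
qed

lemma dual_map_has_real_derivative:
  fixes g :: "'i \<Rightarrow> real \<Rightarrow> real"
  assumes fin: "finite I" and j: "j \<in> I" and p: "1 < p"
    and dg: "\<And>l. l \<in> I \<Longrightarrow> (g l has_real_derivative g' l) (at x)"
    and gp: "\<And>l. l \<in> I \<Longrightarrow> 0 < g l x"
  shows "((\<lambda>t. dual_map \<rho> p I (\<lambda>l. g l t) j) has_real_derivative
      dual_map \<rho> p I (\<lambda>l. g l x) j * (hconj p - 1) * (g' j / g j x
        - (\<Sum>l\<in>I. g l x powr hconj p / (\<Sum>l'\<in>I. g l' x powr hconj p) * (g' l / g l x)))) (at x)"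
proof -
  define q where "q = hconj p"
  define N where "N t = \<rho> * exp ((q - 1) * ln (g j t) - 1/p * ln (\<Sum>l\<in>I. exp (q * ln (g l t))))" for t
  define S where "S = (\<Sum>l\<in>I. exp (q * ln (g l x)))"
  define Z where "Z = (\<Sum>l\<in>I. exp (q * ln (g l x)) * (g' l / g l x))"
  have S: "0 < S" unfolding S_def using fin j by (intro sum_pos) auto
  have "\<forall>\<^sub>F t in nhds x. \<forall>l\<in>I. 0 < g l t"
    using fin gp DERIV_continuous[OF dg] by (rule eventually_all_pos_nhds)
  then have ev: "\<forall>\<^sub>F t in nhds x. dual_map \<rho> p I (\<lambda>l. g l t) j = N t"
    by eventually_elim (simp add: dual_map_pos_eq[OF fin j p] N_def q_def)
  have dN: "(N has_real_derivative N x * ((q - 1) * (g' j / g j x)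
      - 1/p * ((\<Sum>l\<in>I. exp (q * ln (g l x)) * (q * (g' l / g l x))) / S))) (at x)"
    unfolding N_def S_def using gp[OF j] gp j dg fin p S[unfolded S_def]
    by (auto intro!: derivative_eq_intros DERIV_sum simp: field_simps)
      (simp add: diff_divide_distrib[symmetric] add_divide_distrib[symmetric] algebra_simps)
  have "(\<Sum>l\<in>I. exp (q * ln (g l x)) * (q * (g' l / g l x))) = q * Z"
    by (simp add: Z_def sum_distrib_left algebra_simps)
  moreover have "1/p * (q * Z / S) = (q - 1) * (Z / S)"
    by (simp add: q_def hconj_div[OF p, symmetric])
  moreover have "(\<Sum>l\<in>I. g l x powr q / (\<Sum>l'\<in>I. g l' x powr q) * (g' l / g l x)) = Z / S"
  proof -
    have pw: "g l x powr q = exp (q * ln (g l x))" if "l \<in> I" for l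
      using gp[OF that] by (simp add: powr_def)
    then have "(\<Sum>l'\<in>I. g l' x powr q) = S" unfolding S_def by (rule sum.cong[OF refl])
    then show ?thesis
      unfolding Z_def sum_divide_distrib by (intro sum.cong) (auto simp: pw)
  qed
  moreover have "N x = dual_map \<rho> p I (\<lambda>l. g l x) j"
    using eventually_nhds_x_imp_x[OF ev] by simp
  ultimately have "N x * ((q - 1) * (g' j / g j x)
      - 1/p * ((\<Sum>l\<in>I. exp (q * ln (g l x)) * (q * (g' l / g l x))) / S))
    = dual_map \<rho> p I (\<lambda>l. g l x) j * (q - 1) * (g' j / g j x
      - (\<Sum>l\<in>I. g l x powr q / (\<Sum>l'\<in>I. g l' x powr q) * (g' l / g l x)))"
    by (simp add: right_diff_distrib) (simp add: diff_divide_distrib algebra_simps)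
  with dN show ?thesis
    unfolding q_def by (subst DERIV_cong_ev[OF refl ev refl]) simp
qed

lemma weighted_sum_abs_log_deriv_le:
  fixes D :: "'c \<Rightarrow> 'i \<Rightarrow> real" and g :: "'i \<Rightarrow> real"
  assumes fin: "finite I" and j: "j \<in> I" and gp: "\<And>l. l \<in> I \<Longrightarrow> 0 < g l"
    and F0: "0 \<le> F0" and q: "1 < q" and v0: "\<And>c. c \<in> C \<Longrightarrow> 0 \<le> v c"
    and DB: "\<And>l. l \<in> I \<Longrightarrow> (\<Sum>c\<in>C. \<bar>D c l\<bar> * v c) \<le> B * g l"
  shows "(\<Sum>c\<in>C. \<bar>F0 * (q - 1) * (D c j / g j
      - (\<Sum>l\<in>I. g l powr q / (\<Sum>l'\<in>I. g l' powr q) * (D c l / g l)))\<bar> * v c)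
    \<le> 2 * (q - 1) * B * F0"
proof -
  define \<pi> where "\<pi> l = g l powr q / (\<Sum>l'\<in>I. g l' powr q)" for l
  define R where "R c l = \<bar>D c l / g l\<bar> * v c" for c l
  have S: "0 < (\<Sum>l'\<in>I. g l' powr q)" using fin j by (intro sum_pos) (auto dest: gp)
  then have \<pi>0: "\<And>l. 0 \<le> \<pi> l" by (simp add: \<pi>_def)
  have \<pi>1: "(\<Sum>l\<in>I. \<pi> l) = 1" using S by (simp add: \<pi>_def sum_divide_distrib[symmetric])
  have RB: "(\<Sum>c\<in>C. R c l) \<le> B" if l: "l \<in> I" for l
    using DB[OF l] gp[OF l]
    by (simp add: R_def abs_divide sum_divide_distrib[symmetric] divide_le_eq mult.commute)
  have "\<bar>F0 * (q - 1) * (D c j / g j - (\<Sum>l\<in>I. \<pi> l * (D c l / g l)))\<bar> * v c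
      \<le> F0 * (q - 1) * (R c j + (\<Sum>l\<in>I. \<pi> l * R c l))" if c: "c \<in> C" for c
  proof -
    have "\<bar>\<Sum>l\<in>I. \<pi> l * (D c l / g l)\<bar> \<le> (\<Sum>l\<in>I. \<pi> l * \<bar>D c l / g l\<bar>)"
      by (rule order_trans[OF sum_abs]) (simp add: abs_mult \<pi>0)
    then have "\<bar>D c j / g j - (\<Sum>l\<in>I. \<pi> l * (D c l / g l))\<bar> \<le> \<bar>D c j / g j\<bar> + (\<Sum>l\<in>I. \<pi> l * \<bar>D c l / g l\<bar>)"
      using abs_triangle_ineq4[of "D c j / g j"] by linarith
    then have "\<bar>D c j / g j - (\<Sum>l\<in>I. \<pi> l * (D c l / g l))\<bar> * v c \<le> R c j + (\<Sum>l\<in>I. \<pi> l * R c l)"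
      using v0[OF c] mult_right_mono
      by (fastforce simp: R_def sum_distrib_right mult.assoc distrib_right)
    then show ?thesis
      using F0 q by (simp add: abs_mult mult.assoc mult_left_mono)
  qed
  then have "(\<Sum>c\<in>C. \<bar>F0 * (q - 1) * (D c j / g j - (\<Sum>l\<in>I. \<pi> l * (D c l / g l)))\<bar> * v c)
      \<le> (\<Sum>c\<in>C. F0 * (q - 1) * (R c j + (\<Sum>l\<in>I. \<pi> l * R c l)))"
    by (rule sum_mono)
  also have "\<dots> = F0 * (q - 1) * ((\<Sum>c\<in>C. R c j) + (\<Sum>l\<in>I. \<pi> l * (\<Sum>c\<in>C. R c l)))"
    by (simp add: sum_distrib_left[symmetric] sum.distrib)
      (simp add: sum_distrib_left sum.swap[of _ C I])
  also have "\<dots> \<le> F0 * (q - 1) * (B + (\<Sum>l\<in>I. \<pi> l * B))"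
    using RB j \<pi>0 F0 q by (intro mult_left_mono add_mono sum_mono) auto
  also have "\<dots> = 2 * (q - 1) * B * F0"
    by (simp add: sum_distrib_right[symmetric] \<pi>1)
  finally show ?thesis unfolding \<pi>_def .
qed

lemma dual_map_deriv_weighted_bound:
  fixes g :: "'c \<Rightarrow> real \<Rightarrow> 'i \<Rightarrow> real"
  assumes fin: "finite I" and j: "j \<in> I" and p: "1 < p" and \<rho>: "0 \<le> \<rho>"
    and pos: "\<And>l. l \<in> I \<Longrightarrow> 0 < g0 l"
    and g0: "\<And>c. c \<in> C \<Longrightarrow> g c (\<tau> c) = g0"
    and dg: "\<And>c l. c \<in> C \<Longrightarrow> l \<in> I \<Longrightarrow> ((\<lambda>t. g c t l) has_real_derivative D c l) (at (\<tau> c))"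
    and F: "\<And>c. c \<in> C \<Longrightarrow> \<forall>\<^sub>F t in nhds (\<tau> c). F c t = dual_map \<rho> p I (g c t) j"
    and v0: "\<And>c. c \<in> C \<Longrightarrow> 0 \<le> v c"
    and DB: "\<And>l. l \<in> I \<Longrightarrow> (\<Sum>c\<in>C. \<bar>D c l\<bar> * v c) \<le> B * g0 l"
  shows "(\<Sum>c\<in>C. \<bar>deriv (F c) (\<tau> c)\<bar> * v c) \<le> 2 * (hconj p - 1) * B * dual_map \<rho> p I g0 j"
proof -
  have "deriv (F c) (\<tau> c) = dual_map \<rho> p I g0 j * (hconj p - 1) * (D c j / g0 j
      - (\<Sum>l\<in>I. g0 l powr hconj p / (\<Sum>l'\<in>I. g0 l' powr hconj p) * (D c l / g0 l)))"
    if c: "c \<in> C" for c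
  proof -
    have "((\<lambda>t. dual_map \<rho> p I (\<lambda>l. g c t l) j) has_real_derivative dual_map \<rho> p I g0 j
        * (hconj p - 1) * (D c j / g0 j
          - (\<Sum>l\<in>I. g0 l powr hconj p / (\<Sum>l'\<in>I. g0 l' powr hconj p) * (D c l / g0 l)))) (at (\<tau> c))"
      using dual_map_has_real_derivative[OF fin j p, where g="\<lambda>l t. g c t l" and g'="D c" and x="\<tau> c"] dg[OF c] pos g0[OF c]
      by simp
    then show ?thesis
      by (subst deriv_cong_ev[OF F[OF c] refl]) (simp add: DERIV_imp_deriv)
  qed
  then have "(\<Sum>c\<in>C. \<bar>deriv (F c) (\<tau> c)\<bar> * v c) = (\<Sum>c\<in>C. \<bar>dual_map \<rho> p I g0 j * (hconj p - 1)
      * (D c j / g0 j - (\<Sum>l\<in>I. g0 l powr hconj p / (\<Sum>l'\<in>I. g0 l' powr hconj p) * (D c l / g0 l)))\<bar> * v c)"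
    by (intro sum.cong) auto
  also have "\<dots> \<le> 2 * (hconj p - 1) * B * dual_map \<rho> p I g0 j"
    using fin j pos \<rho> v0 DB hconj_gt_1[OF p] dual_map_nonneg[of \<rho> g0 j]
    by (intro weighted_sum_abs_log_deriv_le) (auto simp: less_imp_le)
  finally show ?thesis .
qed

section \<open>The function Psi\<close>

lemma sum_powr_le_Max:
  fixes b s e :: "'i \<Rightarrow> real"
  assumes fin: "finite A" and ne: "A \<noteq> {}" and b0: "\<And>l. l \<in> A \<Longrightarrow> 0 \<le> b l"
    and s0: "\<And>l. l \<in> A \<Longrightarrow> 0 \<le> s l" and s1: "\<And>l. l \<in> A \<Longrightarrow> s l \<le> 1"
    and e: "\<And>l. l \<in> A \<Longrightarrow> p \<le> e l" and sum_s: "(\<Sum>l\<in>A. s l powr p) \<le> 1"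
  shows "(\<Sum>l\<in>A. b l * s l powr e l) \<le> Max (b ` A)"
proof -
  have M0: "0 \<le> Max (b ` A)"
    using fin ne b0 by (meson Max_ge ex_in_conv finite_imageI image_eqI order_trans)
  have "(\<Sum>l\<in>A. b l * s l powr e l) \<le> (\<Sum>l\<in>A. Max (b ` A) * s l powr p)"
    using fin b0 s0 s1 e M0 by (intro sum_mono mult_mono powr_mono') auto
  also have "\<dots> \<le> Max (b ` A)"
    using sum_s M0 by (simp add: sum_distrib_left[symmetric] mult_left_le)
  finally show ?thesis .
qed

lemma sum_powr_le_dual_norm:
  fixes b s e :: "'i \<Rightarrow> real"
  assumes fin: "finite A" and b0: "\<And>l. l \<in> A \<Longrightarrow> 0 \<le> b l"
    and s0: "\<And>l. l \<in> A \<Longrightarrow> 0 \<le> s l" and s1: "\<And>l. l \<in> A \<Longrightarrow> s l \<le> 1"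
    and e: "\<And>l. l \<in> A \<Longrightarrow> e0 \<le> e l" and e0: "0 < e0" "e0 < p"
    and sum_s: "(\<Sum>l\<in>A. s l powr p) \<le> 1"
  shows "(\<Sum>l\<in>A. b l * s l powr e l) \<le> (\<Sum>l\<in>A. b l powr (p / (p - e0))) powr (1 - e0 / p)"
proof -
  define r where "r = p / e0"
  define r' where "r' = p / (p - e0)"
  have r: "1 < r" "1 < r'" "1/r' + 1/r = 1" "1/r' = 1 - e0 / p"
    unfolding r_def r'_def using e0 by (auto simp: field_simps)
  have "(\<Sum>l\<in>A. b l * s l powr e l) \<le> (\<Sum>l\<in>A. b l * s l powr e0)"
    using b0 s0 s1 e by (intro sum_mono mult_left_mono powr_mono') auto
  also have "\<dots> \<le> (\<Sum>l\<in>A. \<bar>b l\<bar> powr r') powr (1/r') * (\<Sum>l\<in>A. \<bar>s l powr e0\<bar> powr r) powr (1/r)"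
    using fin r by (intro Holder_inequality_sum) auto
  also have "(\<Sum>l\<in>A. \<bar>b l\<bar> powr r') = (\<Sum>l\<in>A. b l powr r')"
    using b0 by (intro sum.cong) auto
  also have "(\<Sum>l\<in>A. \<bar>s l powr e0\<bar> powr r) = (\<Sum>l\<in>A. s l powr p)"
    unfolding r_def using e0 by (simp add: powr_powr)
  also have "(\<Sum>l\<in>A. b l powr r') powr (1/r') * (\<Sum>l\<in>A. s l powr p) powr (1/r)
      \<le> (\<Sum>l\<in>A. b l powr r') powr (1/r') * 1"
    using sum_s r e0 by (intro mult_left_mono powr_le1) (auto simp: sum_nonneg)
  finally show ?thesis unfolding r'_def r(4)[unfolded r'_def] by simp
qed

text \<open>The two summands of PsiA handle the indices with \<alpha>_l q < p (by Hoelder's inequality)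
  and those with \<alpha>_l q \<ge> p (by the maximum) separately.\<close>
lemma q_norm_le_PsiA:
  fixes \<delta> \<alpha> s :: "nat \<Rightarrow> real"
  assumes q: "1 < q" and p: "0 < p" and \<alpha>: "\<And>l. l < n1 \<Longrightarrow> 0 < \<alpha> l"
    and \<delta>: "\<And>l. l < n1 \<Longrightarrow> 0 \<le> \<delta> l" and t: "0 \<le> t"
    and s0: "\<And>l. l < n1 \<Longrightarrow> 0 \<le> s l" and sum_s: "(\<Sum>l<n1. s l powr p) \<le> 1"
  shows "(\<Sum>l<n1. (\<delta> l * (s l * t) powr \<alpha> l) powr q) powr (1/q) \<le> PsiA n1 \<alpha> q p \<delta> t"
proof -
  define b where "b l = (\<delta> l * t powr \<alpha> l) powr q" for l
  define J where "J = {l. l < n1 \<and> \<alpha> l * q < p}"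
  define Jc where "Jc = {l. l < n1 \<and> p \<le> \<alpha> l * q}"
  define ab where "ab = Min (\<alpha> ` J)"
  define AT where "AT = (\<Sum>l\<in>J. b l powr (p / (p - ab * q))) powr (1 - ab * q / p)"
  define MT where "MT = (if Jc = {} then 0 else Max (b ` Jc))"
  have fin: "finite J" "finite Jc" and split: "{..<n1} = J \<union> Jc" "J \<inter> Jc = {}"
    unfolding J_def Jc_def by auto
  have s1: "s l \<le> 1" if l: "l < n1" for l
  proof -
    have "s l powr p \<le> 1 powr p"
      using sum_s member_le_sum[of l "{..<n1}" "\<lambda>l. s l powr p"] l by simp
    then show ?thesis using powr_less_mono2[OF p, of 1 "s l"] by linarith
  qed
  have b0: "0 \<le> b l" for l by (simp add: b_def)
  have sub: "(\<Sum>l\<in>X. s l powr p) \<le> 1" if "X \<subseteq> {..<n1}" for X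
    using sum_s sum_mono2[OF _ that, of "\<lambda>l. s l powr p"] by fastforce
  have summand: "(\<delta> l * (s l * t) powr \<alpha> l) powr q = b l * s l powr (\<alpha> l * q)" if "l < n1" for l
    using \<delta>[OF that] s0[OF that] t by (simp add: b_def powr_mult powr_powr mult_ac)
  have JA: "(\<Sum>l\<in>J. b l * s l powr (\<alpha> l * q)) \<le> AT"
  proof (cases "J = {}")
    case False
    then have "ab \<in> \<alpha> ` J" unfolding ab_def using fin by (intro Min_in) auto
    then have "0 < ab * q" "ab * q < p" using \<alpha> q unfolding J_def by auto
    moreover have "ab * q \<le> \<alpha> l * q" if "l \<in> J" for l
      unfolding ab_def using that fin q by (intro mult_right_mono Min_le) auto
    ultimately show ?thesis unfolding AT_def using b0 s0 s1 sub[of J]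
      by (intro sum_powr_le_dual_norm fin) (auto simp: J_def)
  qed (simp add: AT_def)
  have JM: "(\<Sum>l\<in>Jc. b l * s l powr (\<alpha> l * q)) \<le> MT"
  proof (cases "Jc = {}")
    case False
    have "(\<Sum>l\<in>Jc. b l * s l powr (\<alpha> l * q)) \<le> Max (b ` Jc)"
      using False fin b0 s0 s1 sub[of Jc] by (intro sum_powr_le_Max) (auto simp: Jc_def)
    then show ?thesis using False by (simp add: MT_def)
  qed (simp add: MT_def)
  have "(\<Sum>l<n1. (\<delta> l * (s l * t) powr \<alpha> l) powr q) = (\<Sum>l<n1. b l * s l powr (\<alpha> l * q))"
    by (rule sum.cong) (auto simp: summand)
  also have "\<dots> = (\<Sum>l\<in>J. b l * s l powr (\<alpha> l * q)) + (\<Sum>l\<in>Jc. b l * s l powr (\<alpha> l * q))"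
    unfolding split(1) using split fin by (simp add: sum.union_disjoint)
  also have "\<dots> \<le> AT + MT" using JA JM by simp
  finally have "(\<Sum>l<n1. (\<delta> l * (s l * t) powr \<alpha> l) powr q) powr (1/q) \<le> (AT + MT) powr (1/q)"
    using q by (intro powr_mono2) (auto simp: sum_nonneg)
  also have "(AT + MT) powr (1/q) = PsiA n1 \<alpha> q p \<delta> t"
    unfolding PsiA_def Let_def AT_def MT_def ab_def J_def Jc_def b_def
    by (simp add: powr_powr mult.commute)
  finally show ?thesis .
qed

lemma sum_row_norms_powr_le_1:
  fixes u :: "'a \<Rightarrow> 'b \<Rightarrow> real"
  assumes p: "0 < p" and \<rho>: "0 < \<rho>" and norm: "(\<Sum>l\<in>A. \<Sum>m\<in>B. \<bar>u l m\<bar> powr p) powr (1/p) \<le> \<rho>"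
  shows "(\<Sum>l\<in>A. ((\<Sum>m\<in>B. \<bar>u l m\<bar> powr p) powr (1/p) / \<rho>) powr p) \<le> 1"
proof -
  have "(\<Sum>l\<in>A. \<Sum>m\<in>B. \<bar>u l m\<bar> powr p) = ((\<Sum>l\<in>A. \<Sum>m\<in>B. \<bar>u l m\<bar> powr p) powr (1/p)) powr p"
    using p by (simp add: powr_powr sum_nonneg)
  also have "\<dots> \<le> \<rho> powr p" using norm p by (intro powr_mono2) auto
  finally show ?thesis
    using \<rho> p by (simp add: powr_divide powr_powr sum_nonneg sum_divide_distrib[symmetric] divide_le_eq)
qed

lemma weighted_sum_le_PsiA:
  fixes wk \<delta> \<alpha> xs :: "nat \<Rightarrow> real" and u :: "nat \<Rightarrow> nat \<Rightarrow> real"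
  assumes pw: "1 < pw" and pu: "1 < pu"
    and wkn: "(\<Sum>l<n1. \<bar>wk l\<bar> powr pw) powr (1/pw) \<le> \<rho>w"
    and u0: "\<And>l m. l < n1 \<Longrightarrow> m < d \<Longrightarrow> 0 \<le> u l m"
    and un: "(\<Sum>l<n1. \<Sum>m<d. \<bar>u l m\<bar> powr pu) powr (1/pu) \<le> \<rho>u" and \<rho>u: "0 < \<rho>u"
    and xs0: "\<And>m. m < d \<Longrightarrow> 0 \<le> xs m"
    and xn: "(\<Sum>m<d. \<bar>xs m\<bar> powr hconj pu) powr (1/hconj pu) \<le> \<rho>x"
    and \<delta>: "\<And>l. l < n1 \<Longrightarrow> 0 \<le> \<delta> l" and \<alpha>: "\<And>l. l < n1 \<Longrightarrow> 0 < \<alpha> l"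
  shows "(\<Sum>l<n1. wk l * (\<delta> l * (\<Sum>m<d. u l m * xs m) powr \<alpha> l))
    \<le> \<rho>w * PsiA n1 \<alpha> (hconj pw) pu \<delta> (\<rho>u * \<rho>x)"
proof -
  define q where "q = hconj pw"
  define z where "z l = (\<Sum>m<d. u l m * xs m)" for l
  define s where "s l = (\<Sum>m<d. \<bar>u l m\<bar> powr pu) powr (1/pu) / \<rho>u" for l
  define t where "t = \<rho>u * \<rho>x"
  have q: "1 < q" using hconj_gt_1[OF pw] by (simp add: q_def)
  have \<rho>x: "0 \<le> \<rho>x" using xn by (meson order_trans powr_ge_zero)
  have z: "0 \<le> z l" "z l \<le> s l * t" if "l < n1" for l
  proof -
    show "0 \<le> z l" unfolding z_def using u0 xs0 that by (intro sum_nonneg) auto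
    have "z l \<le> (\<Sum>m<d. \<bar>u l m\<bar> powr pu) powr (1/pu) * (\<Sum>m<d. \<bar>xs m\<bar> powr hconj pu) powr (1/hconj pu)"
      unfolding z_def using pu hconj_gt_1[OF pu] inverse_add_inverse_hconj[OF pu]
      by (intro Holder_inequality_sum) auto
    also have "\<dots> \<le> (\<Sum>m<d. \<bar>u l m\<bar> powr pu) powr (1/pu) * \<rho>x"
      using xn by (intro mult_left_mono) auto
    finally show "z l \<le> s l * t" using \<rho>u by (simp add: s_def t_def)
  qed
  have sum_s: "(\<Sum>l<n1. s l powr pu) \<le> 1"
    unfolding s_def using pu \<rho>u un by (intro sum_row_norms_powr_le_1) auto
  have "(\<Sum>l<n1. wk l * (\<delta> l * z l powr \<alpha> l))
      \<le> (\<Sum>l<n1. \<bar>wk l\<bar> powr pw) powr (1/pw) * (\<Sum>l<n1. \<bar>\<delta> l * z l powr \<alpha> l\<bar> powr q) powr (1/q)"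
    using pw q inverse_add_inverse_hconj[OF pw] by (intro Holder_inequality_sum) (auto simp: q_def)
  also have "\<dots> \<le> \<rho>w * (\<Sum>l<n1. (\<delta> l * (s l * t) powr \<alpha> l) powr q) powr (1/q)"
  proof (rule mult_mono[OF wkn])
    have "\<bar>\<delta> l * z l powr \<alpha> l\<bar> powr q \<le> (\<delta> l * (s l * t) powr \<alpha> l) powr q" if l: "l < n1" for l
    proof -
      have "z l powr \<alpha> l \<le> (s l * t) powr \<alpha> l" using z[OF l] \<alpha>[OF l] by (intro powr_mono2) auto
      then have "\<bar>\<delta> l * z l powr \<alpha> l\<bar> \<le> \<delta> l * (s l * t) powr \<alpha> l"
        using \<delta>[OF l] by (simp add: abs_mult mult_left_mono)
      then show ?thesis using q by (intro powr_mono2) auto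
    qed
    then show "(\<Sum>l<n1. \<bar>\<delta> l * z l powr \<alpha> l\<bar> powr q) powr (1/q)
        \<le> (\<Sum>l<n1. (\<delta> l * (s l * t) powr \<alpha> l) powr q) powr (1/q)"
      using q by (intro powr_mono2[OF _ _ sum_mono]) (auto intro: sum_nonneg)
  qed (use wkn in \<open>auto intro: order_trans[OF powr_ge_zero]\<close>)
  also have "\<dots> \<le> \<rho>w * PsiA n1 \<alpha> q pu \<delta> t"
    using q pu \<alpha> \<delta> sum_s \<rho>u \<rho>x wkn
    by (intro mult_left_mono q_norm_le_PsiA) (auto simp: s_def t_def intro: order_trans[OF powr_ge_zero])
  finally show ?thesis unfolding z_def q_def t_def .
qed

section \<open>Softmax\<close>

lemma ln_sum_exp_has_real_derivative:
  fixes K :: nat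
  assumes K: "0 < K" and dF: "\<And>k. k < K \<Longrightarrow> (F k has_real_derivative F' k) (at x)"
  shows "((\<lambda>t. ln (\<Sum>k<K. exp (F k t))) has_real_derivative
     (\<Sum>k<K. exp (F k x) / (\<Sum>k'<K. exp (F k' x)) * F' k)) (at x)"
proof -
  have S: "0 < (\<Sum>k<K. exp (F k x))" using K by (auto intro!: sum_pos)
  have "((\<lambda>t. \<Sum>k<K. exp (F k t)) has_real_derivative (\<Sum>k<K. exp (F k x) * F' k)) (at x)"
    using dF by (auto intro!: DERIV_sum derivative_eq_intros)
  from DERIV_chain2[OF DERIV_ln[OF S] this] show ?thesis
    by (simp add: sum_divide_distrib inverse_eq_divide mult.commute)
qed

lemma softmax_has_real_derivative:
  fixes K :: nat
  assumes i: "i < K" and dF: "\<And>k. k < K \<Longrightarrow> (F k has_real_derivative F' k) (at x)"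
  shows "((\<lambda>t. exp (F i t) / (\<Sum>k<K. exp (F k t))) has_real_derivative
     exp (F i x) / (\<Sum>k'<K. exp (F k' x))
       * (F' i - (\<Sum>k<K. exp (F k x) / (\<Sum>k'<K. exp (F k' x)) * F' k))) (at x)"
proof -
  define S where "S = (\<Sum>k<K. exp (F k x))"
  have S: "0 < S" unfolding S_def using i by (auto intro!: sum_pos)
  have "((\<lambda>t. \<Sum>k<K. exp (F k t)) has_real_derivative (\<Sum>k<K. exp (F k x) * F' k)) (at x)"
    using dF by (auto intro!: DERIV_sum derivative_eq_intros)
  from DERIV_divide[OF DERIV_chain2[OF DERIV_exp dF[OF i]] this] S
  have "((\<lambda>t. exp (F i t) / (\<Sum>k<K. exp (F k t))) has_real_derivative
      (exp (F i x) * F' i * S - exp (F i x) * (\<Sum>k<K. exp (F k x) * F' k)) / (S * S)) (at x)"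
    unfolding S_def by (simp add: mult.commute)
  moreover have "(exp (F i x) * F' i * S - exp (F i x) * (\<Sum>k<K. exp (F k x) * F' k)) / (S * S)
      = exp (F i x) / S * (F' i - (\<Sum>k<K. exp (F k x) / S * F' k))"
    using S by (simp add: field_simps sum_divide_distrib[symmetric])
  ultimately show ?thesis unfolding S_def by simp
qed

lemma softmax_dir_weighted_bound:
  fixes Fd :: "'c \<Rightarrow> nat \<Rightarrow> real" and \<sigma> :: "nat \<Rightarrow> real" and K :: nat
  assumes r: "r < K" and \<sigma>0: "\<And>k. k < K \<Longrightarrow> 0 \<le> \<sigma> k" and \<sigma>1: "(\<Sum>k<K. \<sigma> k) = 1"
    and v0: "\<And>c. c \<in> C \<Longrightarrow> 0 \<le> v c"
    and FB: "\<And>k. k < K \<Longrightarrow> (\<Sum>c\<in>C. \<bar>Fd c k\<bar> * v c) \<le> B"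
  shows "(\<Sum>c\<in>C. \<bar>\<sigma> r * (Fd c r - (\<Sum>k<K. \<sigma> k * Fd c k))\<bar> * v c) \<le> 2 * (1 - \<sigma> r) * B"
proof -
  define \<delta> where "\<delta> k = (if k = r then 1 else 0) - \<sigma> k" for k
  have \<sigma>r: "\<sigma> r \<le> 1"
    using member_le_sum[of r "{..<K}" \<sigma>] r \<sigma>0 \<sigma>1 by simp
  have "(\<Sum>k<K. (if k = r then 1 else 0) * Fd c k) = (\<Sum>k<K. if k = r then Fd c k else 0)" for c
    by (rule sum.cong) auto
  then have \<delta>_sum: "Fd c r - (\<Sum>k<K. \<sigma> k * Fd c k) = (\<Sum>k<K. \<delta> k * Fd c k)" for c
    using r by (simp add: \<delta>_def left_diff_distrib sum_subtractf)
  have "\<bar>\<sigma> r * (Fd c r - (\<Sum>k<K. \<sigma> k * Fd c k))\<bar> * v c \<le> (\<Sum>k<K. \<bar>\<delta> k\<bar> * (\<bar>Fd c k\<bar> * v c))"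
    if c: "c \<in> C" for c
  proof -
    have "\<bar>\<sigma> r * (Fd c r - (\<Sum>k<K. \<sigma> k * Fd c k))\<bar> \<le> \<bar>Fd c r - (\<Sum>k<K. \<sigma> k * Fd c k)\<bar>"
      using \<sigma>r \<sigma>0[OF r] by (simp add: abs_mult mult_left_le_one_le)
    also have "\<dots> \<le> (\<Sum>k<K. \<bar>\<delta> k\<bar> * \<bar>Fd c k\<bar>)"
      unfolding \<delta>_sum by (rule order_trans[OF sum_abs]) (simp add: abs_mult)
    finally have "\<bar>\<sigma> r * (Fd c r - (\<Sum>k<K. \<sigma> k * Fd c k))\<bar> \<le> (\<Sum>k<K. \<bar>\<delta> k\<bar> * \<bar>Fd c k\<bar>)" .
    then have "\<bar>\<sigma> r * (Fd c r - (\<Sum>k<K. \<sigma> k * Fd c k))\<bar> * v c \<le> (\<Sum>k<K. \<bar>\<delta> k\<bar> * \<bar>Fd c k\<bar>) * v c"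
      using v0[OF c] by (rule mult_right_mono)
    then show ?thesis by (simp add: sum_distrib_right mult.assoc)
  qed
  then have "(\<Sum>c\<in>C. \<bar>\<sigma> r * (Fd c r - (\<Sum>k<K. \<sigma> k * Fd c k))\<bar> * v c)
      \<le> (\<Sum>k<K. \<bar>\<delta> k\<bar> * (\<Sum>c\<in>C. \<bar>Fd c k\<bar> * v c))"
    by (subst sum_distrib_left, subst sum.swap) (rule sum_mono)
  also have "\<dots> \<le> (\<Sum>k<K. \<bar>\<delta> k\<bar> * B)" using FB by (intro sum_mono mult_left_mono) auto
  also have "(\<Sum>k<K. \<bar>\<delta> k\<bar>) = \<bar>\<delta> r\<bar> + (\<Sum>k\<in>{..<K} - {r}. \<sigma> k)"
    using r \<sigma>0 by (simp add: sum.remove \<delta>_def)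
  then have "(\<Sum>k<K. \<bar>\<delta> k\<bar> * B) = 2 * (1 - \<sigma> r) * B"
    using r \<sigma>1 \<sigma>r by (simp add: sum_distrib_right[symmetric] sum_diff1 \<delta>_def)
  finally show ?thesis .
qed

lemma sum_product_deriv_weighted_bound:
  fixes cd Pd :: "'c \<Rightarrow> 's \<Rightarrow> 'r \<Rightarrow> real" and cc P :: "'s \<Rightarrow> 'r \<Rightarrow> real"
  assumes v0: "\<And>c. c \<in> C \<Longrightarrow> 0 \<le> v c"
    and cc0: "\<And>s r. s \<in> S \<Longrightarrow> r \<in> R \<Longrightarrow> 0 \<le> cc s r"
    and P0: "\<And>s r. s \<in> S \<Longrightarrow> r \<in> R \<Longrightarrow> 0 \<le> P s r"
    and cdB: "\<And>s r. s \<in> S \<Longrightarrow> r \<in> R \<Longrightarrow> (\<Sum>c\<in>C. \<bar>cd c s r\<bar> * v c) \<le> B * cc s r"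
    and PdB: "\<And>s r. s \<in> S \<Longrightarrow> r \<in> R \<Longrightarrow> (\<Sum>c\<in>C. \<bar>Pd c s r\<bar> * v c) \<le> E * P s r"
    and BE: "0 \<le> B + E" and N: "0 \<le> N" and \<epsilon>: "0 \<le> \<epsilon>"
  shows "(\<Sum>c\<in>C. \<bar>N * (\<Sum>s\<in>S. \<Sum>r\<in>R. cd c s r * P s r + cc s r * Pd c s r)\<bar> * v c)
     \<le> (B + E) * (N * (\<Sum>s\<in>S. \<Sum>r\<in>R. cc s r * P s r) + \<epsilon>)"
proof -
  define T where "T c s r = \<bar>cd c s r\<bar> * v c * P s r + cc s r * (\<bar>Pd c s r\<bar> * v c)" for c s r
  have "\<bar>N * (\<Sum>s\<in>S. \<Sum>r\<in>R. cd c s r * P s r + cc s r * Pd c s r)\<bar> * v c \<le> N * (\<Sum>s\<in>S. \<Sum>r\<in>R. T c s r)"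
    if c: "c \<in> C" for c
  proof -
    have "\<bar>\<Sum>s\<in>S. \<Sum>r\<in>R. cd c s r * P s r + cc s r * Pd c s r\<bar>
        \<le> (\<Sum>s\<in>S. \<Sum>r\<in>R. \<bar>cd c s r\<bar> * P s r + cc s r * \<bar>Pd c s r\<bar>)"
      using cc0 P0 by (intro order_trans[OF sum_abs] sum_mono order_trans[OF sum_abs]
          order_trans[OF abs_triangle_ineq]) (simp add: abs_mult)
    then have "\<bar>\<Sum>s\<in>S. \<Sum>r\<in>R. cd c s r * P s r + cc s r * Pd c s r\<bar> * v c
        \<le> (\<Sum>s\<in>S. \<Sum>r\<in>R. \<bar>cd c s r\<bar> * P s r + cc s r * \<bar>Pd c s r\<bar>) * v c"
      using v0[OF c] by (rule mult_right_mono)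
    also have "\<dots> = (\<Sum>s\<in>S. \<Sum>r\<in>R. T c s r)"
      by (simp add: T_def sum_distrib_left sum_distrib_right distrib_left distrib_right mult_ac)
    finally have "\<bar>\<Sum>s\<in>S. \<Sum>r\<in>R. cd c s r * P s r + cc s r * Pd c s r\<bar> * v c \<le> (\<Sum>s\<in>S. \<Sum>r\<in>R. T c s r)" .
    then show ?thesis
      using N by (simp add: abs_mult mult.assoc mult_left_mono)
  qed
  then have "(\<Sum>c\<in>C. \<bar>N * (\<Sum>s\<in>S. \<Sum>r\<in>R. cd c s r * P s r + cc s r * Pd c s r)\<bar> * v c)
      \<le> (\<Sum>c\<in>C. N * (\<Sum>s\<in>S. \<Sum>r\<in>R. T c s r))"
    by (rule sum_mono)
  also have "\<dots> = N * (\<Sum>s\<in>S. \<Sum>r\<in>R. \<Sum>c\<in>C. T c s r)"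
    by (simp add: sum_distrib_left[symmetric] sum.swap[of _ C S] sum.swap[of _ C R])
  also have "\<dots> \<le> N * (\<Sum>s\<in>S. \<Sum>r\<in>R. B * cc s r * P s r + cc s r * (E * P s r))"
    unfolding T_def sum.distrib sum_distrib_left[symmetric] sum_distrib_right[symmetric]
    using N cdB PdB cc0 P0 by (intro mult_left_mono sum_mono add_mono mult_right_mono) auto
  also have "\<dots> = (B + E) * (N * (\<Sum>s\<in>S. \<Sum>r\<in>R. cc s r * P s r))"
    by (simp add: sum_distrib_left algebra_simps)
  also have "\<dots> \<le> (B + E) * (N * (\<Sum>s\<in>S. \<Sum>r\<in>R. cc s r * P s r) + \<epsilon>)"
    using BE \<epsilon> by (simp add: mult_left_mono)
  finally show ?thesis .
qed

section \<open>The one-hidden-layer network\<close>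

lemma sum_fun_upd_times:
  fixes g c :: "'a \<Rightarrow> real"
  assumes "finite B" "m0 \<in> B"
  shows "(\<Sum>m\<in>B. (g(m0 := t)) m * c m) = (\<Sum>m\<in>B. g m * c m) + (t - g m0) * c m0"
proof -
  have "(\<Sum>m\<in>B - {m0}. (g(m0 := t)) m * c m) = (\<Sum>m\<in>B - {m0}. g m * c m)"
    by (rule sum.cong) auto
  then show ?thesis using assms by (simp add: sum.remove algebra_simps)
qed

lemma sum_fun_upd:
  fixes g :: "'a \<Rightarrow> real"
  assumes "finite B" "m0 \<in> B"
  shows "(\<Sum>m\<in>B. (g(m0 := t)) m) = (\<Sum>m\<in>B. g m) + (t - g m0)"
  using sum_fun_upd_times[OF assms, of g t "\<lambda>_. 1"] by simp

lemma sum_sum_fun_upd: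
  fixes w :: "'a \<Rightarrow> 'b \<Rightarrow> real"
  assumes "finite A" "finite B" "k \<in> A" "l \<in> B"
  shows "(\<Sum>r\<in>A. \<Sum>l'\<in>B. (w(k := (w k)(l := t))) r l') = (\<Sum>r\<in>A. \<Sum>l'\<in>B. w r l') + (t - w k l)"
proof -
  have "(\<Sum>r\<in>A. \<Sum>l'\<in>B. (w(k := (w k)(l := t))) r l')
      = (\<Sum>r\<in>A. ((\<lambda>r. \<Sum>l'\<in>B. w r l')(k := \<Sum>l'\<in>B. ((w k)(l := t)) l')) r)"
    by (rule sum.cong) auto
  also have "\<dots> = (\<Sum>r\<in>A. \<Sum>l'\<in>B. w r l') + (t - w k l)"
    using assms by (simp only: sum_fun_upd)
  finally show ?thesis .
qed

lemma sum_product_if_fst: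
  assumes "finite A" "finite B" "a \<in> A"
  shows "(\<Sum>c\<in>A \<times> B. if fst c = a then G (snd c) else 0) = (\<Sum>m\<in>B. G m)"
proof -
  have "(\<Sum>c\<in>A \<times> B. if fst c = a then G (snd c) else 0) = (\<Sum>l\<in>A. \<Sum>m\<in>B. if l = a then G m else 0)"
    by (simp add: sum.cartesian_product split_beta)
  also have "\<dots> = (\<Sum>l\<in>A. if l = a then \<Sum>m\<in>B. G m else 0)"
    by (rule sum.cong) auto
  finally show ?thesis using assms by simp
qed

lemma powr_mult_self: "0 < z \<Longrightarrow> z powr (a - 1) * z = z powr a"
  for z :: real
  using powr_add[of z "a - 1" 1] by simp

locale one_hidden_layer =
  fixes K n1 d n :: nat and x :: "nat \<Rightarrow> nat \<Rightarrow> real" and y :: "nat \<Rightarrow> nat"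
    and \<alpha> :: "nat \<Rightarrow> real" and \<epsilon> :: real
  assumes n_pos: "0 < n" and x_nonneg: "\<And>s m. s < n \<Longrightarrow> m < d \<Longrightarrow> 0 \<le> x s m"
    and y_less: "\<And>s. s < n \<Longrightarrow> y s < K"
    and \<alpha>_ge_1: "\<And>l. l < n1 \<Longrightarrow> 1 \<le> \<alpha> l" and \<epsilon>_pos: "0 < \<epsilon>"
begin

abbreviation "\<Phi> \<equiv> PhiObj K n1 d n x y \<alpha> \<epsilon>"

definition z where "z u s l = (\<Sum>m<d. u l m * x s m)"
definition h where "h u s l = z u s l powr \<alpha> l"
definition e where "e u s l = \<alpha> l * z u s l powr (\<alpha> l - 1)"
definition f where "f w u s r = (\<Sum>l<n1. w r l * h u s l)"
definition sm where "sm w u s r = exp (f w u s r) / (\<Sum>k<K. exp (f w u s k))"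
definition cc where "cc w u s r = (if r = y s then 1 else 0) - sm w u s r + 1"

text \<open>cc_dir w u s F' r is the derivative of cc w u s r when the logits f w u s move with velocity F'.\<close>
definition cc_dir where
  "cc_dir w u s F' r = - (sm w u s r * (F' r - (\<Sum>k<K. sm w u s k * F' k)))"

text \<open>Both partial derivatives of Phi have the form grad R P: see dW_Phi and dU_Phi.\<close>
definition grad where
  "grad R P w u = (1 / real n) * (\<Sum>s<n. \<Sum>r\<in>R. cc w u s r * P s r) + \<epsilon>"

definition gW where "gW w u r l = grad {r} (\<lambda>s _. h u s l) w u"
definition gU where "gU w u a b = grad {..<K} (\<lambda>s r. w r a * e u s a * x s b) w u"
definition pos where "pos u \<longleftrightarrow> (\<forall>l<n1. \<forall>m<d. 0 < u l m)"

lemma sm_nonneg: "0 \<le> sm w u s r"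
  unfolding sm_def by (intro divide_nonneg_nonneg sum_nonneg) auto

lemma sum_sm:
  assumes "0 < K" shows "(\<Sum>k<K. sm w u s k) = 1"
proof -
  have "0 < (\<Sum>k<K. exp (f w u s k))" using assms by (intro sum_pos) auto
  then show ?thesis unfolding sm_def by (simp add: sum_divide_distrib[symmetric])
qed

lemma sm_le_1: "r < K \<Longrightarrow> sm w u s r \<le> 1"
  using member_le_sum[of r "{..<K}" "sm w u s"] sm_nonneg sum_sm[of w u s] by simp

lemma cc_ge: "1 - sm w u s r \<le> cc w u s r"
  by (simp add: cc_def)

lemma cc_nonneg: "r < K \<Longrightarrow> 0 \<le> cc w u s r"
  using cc_ge[of w u s r] sm_le_1[of r w u s] by linarith

lemma sum_cc_mult:
  assumes "s < n"
  shows "(\<Sum>k<K. cc w u s k * F k) = F (y s) - (\<Sum>k<K. sm w u s k * F k) + (\<Sum>k<K. F k)"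
proof -
  have "(\<Sum>k<K. (if k = y s then 1 else 0) * F k) = (\<Sum>k<K. if k = y s then F k else 0)"
    by (rule sum.cong) auto
  then show ?thesis
    using y_less[OF assms] by (simp add: cc_def algebra_simps sum.distrib sum_subtractf)
qed

lemma grad_pos:
  assumes "R \<subseteq> {..<K}" "\<And>s r. s < n \<Longrightarrow> r \<in> R \<Longrightarrow> 0 \<le> P s r"
  shows "0 < grad R P w u"
  unfolding grad_def using assms n_pos \<epsilon>_pos
  by (intro add_nonneg_pos mult_nonneg_nonneg sum_nonneg) (auto intro!: cc_nonneg)

lemma z_nonneg: "pos u \<Longrightarrow> s < n \<Longrightarrow> l < n1 \<Longrightarrow> 0 \<le> z u s l"
  unfolding z_def pos_def using x_nonneg by (auto intro!: sum_nonneg simp: less_imp_le)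

lemma h_nonneg: "0 \<le> h u s l"
  by (simp add: h_def)

lemma e_nonneg: "l < n1 \<Longrightarrow> 0 \<le> e u s l"
  using \<alpha>_ge_1[of l] by (simp add: e_def)

lemma e_mult_z: "pos u \<Longrightarrow> s < n \<Longrightarrow> l < n1 \<Longrightarrow> e u s l * z u s l = \<alpha> l * h u s l"
  using z_nonneg[of u s l] powr_mult_self[of "z u s l" "\<alpha> l"]
  by (cases "z u s l = 0") (auto simp: e_def h_def)

lemma e_deriv_mult_z: "pos u \<Longrightarrow> s < n \<Longrightarrow> l < n1 \<Longrightarrow>
    \<alpha> l * ((\<alpha> l - 1) * z u s l powr (\<alpha> l - 2)) * z u s l = (\<alpha> l - 1) * e u s l"
  using z_nonneg[of u s l] powr_mult_self[of "z u s l" "\<alpha> l - 1"]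
  by (cases "z u s l = 0") (auto simp: e_def)

lemma Phi_eq: "\<Phi> w u = (1 / real n) * (\<Sum>s<n. f w u s (y s) - ln (\<Sum>k<K. exp (f w u s k)) + (\<Sum>r<K. f w u s r))
   + \<epsilon> * ((\<Sum>r<K. \<Sum>l<n1. w r l) + (\<Sum>l<n1. \<Sum>m<d. u l m))"
proof -
  have "fnet n1 d \<alpha> w u (x s) = f w u s" for s
    by (rule ext) (simp add: fnet_def f_def h_def z_def)
  then show ?thesis by (simp add: PhiObj_def xent_def)
qed

lemma Phi_has_real_derivative:
  assumes K: "0 < K"
    and dF: "\<And>s r. s < n \<Longrightarrow> r < K \<Longrightarrow> ((\<lambda>t. f (W t) (U t) s r) has_real_derivative F' s r) (at \<tau>)"
    and dR: "((\<lambda>t. (\<Sum>r<K. \<Sum>l<n1. W t r l) + (\<Sum>l<n1. \<Sum>m<d. U t l m)) has_real_derivative 1) (at \<tau>)"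
  shows "((\<lambda>t. \<Phi> (W t) (U t)) has_real_derivative grad {..<K} F' (W \<tau>) (U \<tau>)) (at \<tau>)"
proof -
  have "((\<lambda>t. f (W t) (U t) s (y s) - ln (\<Sum>k<K. exp (f (W t) (U t) s k)) + (\<Sum>r<K. f (W t) (U t) s r))
      has_real_derivative (\<Sum>k<K. cc (W \<tau>) (U \<tau>) s k * F' s k)) (at \<tau>)" if s: "s < n" for s
    unfolding sum_cc_mult[OF s] sm_def
    using dF[OF s] y_less[OF s] ln_sum_exp_has_real_derivative[OF K, of "\<lambda>k t. f (W t) (U t) s k" "F' s" \<tau>]
    by (intro DERIV_add DERIV_diff DERIV_sum) auto
  then have "((\<lambda>t. \<Phi> (W t) (U t)) has_real_derivative
      (1 / real n) * (\<Sum>s<n. \<Sum>k<K. cc (W \<tau>) (U \<tau>) s k * F' s k) + \<epsilon> * 1) (at \<tau>)"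
    unfolding Phi_eq by (intro DERIV_add DERIV_cmult dR DERIV_sum) auto
  then show ?thesis by (simp add: grad_def)
qed

lemma cc_has_real_derivative:
  assumes r: "r < K" and dF: "\<And>k. k < K \<Longrightarrow> ((\<lambda>t. f (W t) (U t) s k) has_real_derivative F' k) (at \<tau>)"
  shows "((\<lambda>t. cc (W t) (U t) s r) has_real_derivative cc_dir (W \<tau>) (U \<tau>) s F' r) (at \<tau>)"
  using softmax_has_real_derivative[OF r, of "\<lambda>k t. f (W t) (U t) s k" F' \<tau>] dF
  unfolding cc_def cc_dir_def sm_def[symmetric]
  by (auto intro!: derivative_eq_intros)

lemma grad_has_real_derivative:
  assumes R: "R \<subseteq> {..<K}"
    and dF: "\<And>s k. s < n \<Longrightarrow> k < K \<Longrightarrow> ((\<lambda>t. f (W t) (U t) s k) has_real_derivative F' s k) (at \<tau>)"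
    and dP: "\<And>s r. s < n \<Longrightarrow> r \<in> R \<Longrightarrow> ((\<lambda>t. P t s r) has_real_derivative P' s r) (at \<tau>)"
  shows "((\<lambda>t. grad R (P t) (W t) (U t)) has_real_derivative (1 / real n) * (\<Sum>s<n. \<Sum>r\<in>R.
      cc_dir (W \<tau>) (U \<tau>) s (F' s) r * P \<tau> s r + cc (W \<tau>) (U \<tau>) s r * P' s r)) (at \<tau>)"
proof -
  have "((\<lambda>t. cc (W t) (U t) s r * P t s r) has_real_derivative
      cc_dir (W \<tau>) (U \<tau>) s (F' s) r * P \<tau> s r + cc (W \<tau>) (U \<tau>) s r * P' s r) (at \<tau>)"
    if "s < n" "r \<in> R" for s r
    using cc_has_real_derivative[of r W U s "F' s" \<tau>] dF dP that R
    by (auto intro!: derivative_eq_intros)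
  then have "((\<lambda>t. \<Sum>s<n. \<Sum>r\<in>R. cc (W t) (U t) s r * P t s r) has_real_derivative (\<Sum>s<n. \<Sum>r\<in>R.
      cc_dir (W \<tau>) (U \<tau>) s (F' s) r * P \<tau> s r + cc (W \<tau>) (U \<tau>) s r * P' s r)) (at \<tau>)"
    by (intro DERIV_sum) auto
  then show ?thesis
    unfolding grad_def by (rule DERIV_add[OF DERIV_cmult DERIV_const, THEN DERIV_cong]) simp
qed

lemma grad_deriv_weighted_bound:
  assumes R: "R \<subseteq> {..<K}" and v0: "\<And>c. c \<in> C \<Longrightarrow> 0 \<le> v c"
    and P0: "\<And>s r. s < n \<Longrightarrow> r \<in> R \<Longrightarrow> 0 \<le> P s r"
    and F'B: "\<And>s k. s < n \<Longrightarrow> k < K \<Longrightarrow> (\<Sum>c\<in>C. \<bar>F' c s k\<bar> * v c) \<le> B" and B: "0 \<le> B"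
    and P'B: "\<And>s r. s < n \<Longrightarrow> r \<in> R \<Longrightarrow> (\<Sum>c\<in>C. \<bar>P' c s r\<bar> * v c) \<le> E * P s r"
    and BE: "0 \<le> 2 * B + E"
  shows "(\<Sum>c\<in>C. \<bar>(1 / real n) * (\<Sum>s<n. \<Sum>r\<in>R.
      cc_dir w u s (F' c s) r * P s r + cc w u s r * P' c s r)\<bar> * v c) \<le> (2 * B + E) * grad R P w u"
  unfolding grad_def
proof (rule sum_product_deriv_weighted_bound[OF v0 _ P0 _ P'B BE])
  fix s r assume sr: "s \<in> {..<n}" "r \<in> R"
  then have r: "r < K" using R by auto
  have "(\<Sum>c\<in>C. \<bar>cc_dir w u s (F' c s) r\<bar> * v c) \<le> 2 * (1 - sm w u s r) * B"
    unfolding cc_dir_def abs_minus_cancel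
    using sr r sm_nonneg sum_sm[of w u s] v0 F'B
    by (intro softmax_dir_weighted_bound) auto
  also have "\<dots> \<le> 2 * B * cc w u s r"
    using mult_left_mono[OF cc_ge[of w u s r] B] by (simp add: algebra_simps)
  finally show "(\<Sum>c\<in>C. \<bar>cc_dir w u s (F' c s) r\<bar> * v c) \<le> 2 * B * cc w u s r" .
qed (use R \<epsilon>_pos in \<open>auto intro: cc_nonneg\<close>)

lemma f_update_w:
  "l0 < n1 \<Longrightarrow> f (w(k := (w k)(l0 := t))) u s r = f w u s r + (if r = k then (t - w k l0) * h u s l0 else 0)"
  using sum_fun_upd_times[of "{..<n1}" l0 "w k" t "h u s"] by (simp add: f_def)

lemma f_wdir_has_real_derivative:
  "l0 < n1 \<Longrightarrow> ((\<lambda>t. f (w(k := (w k)(l0 := t))) u s r) has_real_derivative (if r = k then h u s l0 else 0)) (at \<tau>)"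
  by (simp add: f_update_w) (auto intro!: derivative_eq_intros)

lemma z_update_u:
  "m0 < d \<Longrightarrow> z (u(l0 := (u l0)(m0 := t))) s l = z u s l + (if l = l0 then (t - u l0 m0) * x s m0 else 0)"
  using sum_fun_upd_times[of "{..<d}" m0 "u l0" t "x s"] by (simp add: z_def)

lemma z_pos: "pos u \<Longrightarrow> s < n \<Longrightarrow> l < n1 \<Longrightarrow> m0 < d \<Longrightarrow> x s m0 \<noteq> 0 \<Longrightarrow> 0 < z u s l"
  unfolding z_def pos_def using x_nonneg[of s]
  by (intro sum_pos2[of _ m0]) (auto simp: less_le)

text \<open>z may vanish, but only when x_{s m0} = 0, and then z does not depend on u_{l0 m0}.\<close>
lemma z_powr_udir_has_real_derivative:
  assumes u: "pos u" and s: "s < n" and l0: "l0 < n1" and m0: "m0 < d"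
  shows "((\<lambda>t. z (u(l0 := (u l0)(m0 := t))) s l powr \<beta>) has_real_derivative
      (if l = l0 then \<beta> * z u s l0 powr (\<beta> - 1) * x s m0 else 0)) (at (u l0 m0))"
proof (cases "l = l0 \<and> x s m0 \<noteq> 0")
  case True
  then have "0 < z u s l0" using z_pos[OF u s l0 m0] by simp
  then have "((\<lambda>t. (z u s l0 + (t - u l0 m0) * x s m0) powr \<beta>) has_real_derivative
      \<beta> * (z u s l0 + (u l0 m0 - u l0 m0) * x s m0) powr (\<beta> - 1) * x s m0) (at (u l0 m0))"
    by (intro DERIV_fun_powr[of _ _ _ \<beta>, simplified] derivative_eq_intros) auto
  then show ?thesis using True m0 by (simp add: z_update_u)
qed (use m0 in \<open>auto simp: z_update_u\<close>)

lemma h_udir_has_real_derivative: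
  "pos u \<Longrightarrow> s < n \<Longrightarrow> l0 < n1 \<Longrightarrow> m0 < d \<Longrightarrow>
    ((\<lambda>t. h (u(l0 := (u l0)(m0 := t))) s l) has_real_derivative
      (if l = l0 then e u s l0 * x s m0 else 0)) (at (u l0 m0))"
  using z_powr_udir_has_real_derivative[of u s l0 m0 l "\<alpha> l"]
  by (cases "l = l0") (simp_all add: h_def e_def)

lemma e_udir_has_real_derivative:
  "pos u \<Longrightarrow> s < n \<Longrightarrow> l0 < n1 \<Longrightarrow> m0 < d \<Longrightarrow>
    ((\<lambda>t. e (u(l0 := (u l0)(m0 := t))) s l) has_real_derivative
      (if l = l0 then \<alpha> l * ((\<alpha> l - 1) * z u s l powr (\<alpha> l - 2) * x s m0) else 0)) (at (u l0 m0))"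
  using DERIV_cmult[OF z_powr_udir_has_real_derivative[of u s l0 m0 l "\<alpha> l - 1"], of "\<alpha> l"]
  by (cases "l = l0") (simp_all add: e_def algebra_simps)

lemma f_udir_has_real_derivative:
  assumes "pos u" "s < n" "l0 < n1" "m0 < d"
  shows "((\<lambda>t. f w (u(l0 := (u l0)(m0 := t))) s r) has_real_derivative w r l0 * (e u s l0 * x s m0))
    (at (u l0 m0))"
proof -
  have "((\<lambda>t. f w (u(l0 := (u l0)(m0 := t))) s r) has_real_derivative
      (\<Sum>l<n1. w r l * (if l = l0 then e u s l0 * x s m0 else 0))) (at (u l0 m0))"
    unfolding f_def by (intro DERIV_sum DERIV_cmult h_udir_has_real_derivative assms)
  then show ?thesis using assms(3) by (simp add: if_distrib cong: if_cong)
qed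

lemma dW_Phi:
  assumes r: "r < K" and l: "l < n1"
  shows "dW \<Phi> w u r l = gW w u r l"
proof -
  have dF: "((\<lambda>t. f (w(r := (w r)(l := t))) u s r') has_real_derivative (if r' = r then h u s l else 0))
      (at (w r l))" for s r'
    using f_wdir_has_real_derivative[OF l] .
  have "((\<lambda>t. (\<Sum>r'<K. \<Sum>l'<n1. (w(r := (w r)(l := t))) r' l') + (\<Sum>l'<n1. \<Sum>m<d. u l' m))
      has_real_derivative 1) (at (w r l))"
    using r l by (simp only: sum_sum_fun_upd finite_lessThan lessThan_iff) (auto intro!: derivative_eq_intros)
  from Phi_has_real_derivative[OF _ dF this] r
  have "((\<lambda>t. \<Phi> (w(r := (w r)(l := t))) u) has_real_derivative
      grad {..<K} (\<lambda>s r'. if r' = r then h u s l else 0) w u) (at (w r l))"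
    by (simp del: fun_upd_apply)
  moreover have "grad {..<K} (\<lambda>s r'. if r' = r then h u s l else 0) w u = gW w u r l"
    using r by (simp add: gW_def grad_def if_distrib[of "\<lambda>c. _ * c"] sum.delta' cong: if_cong)
  ultimately show ?thesis unfolding dW_def by (simp add: DERIV_imp_deriv)
qed

lemma dU_Phi:
  assumes K: "0 < K" and u: "pos u" and a: "a < n1" and b: "b < d"
  shows "dU \<Phi> w u a b = gU w u a b"
proof -
  have "((\<lambda>t. (\<Sum>r<K. \<Sum>l<n1. w r l) + (\<Sum>l<n1. \<Sum>m<d. (u(a := (u a)(b := t))) l m))
      has_real_derivative 1) (at (u a b))"
    using a b by (simp only: sum_sum_fun_upd finite_lessThan lessThan_iff) (auto intro!: derivative_eq_intros)
  from Phi_has_real_derivative[OF K f_udir_has_real_derivative[OF u _ a b] this]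
  have "((\<lambda>t. \<Phi> w (u(a := (u a)(b := t)))) has_real_derivative
      grad {..<K} (\<lambda>s r. w r a * (e u s a * x s b)) w u) (at (u a b))"
    by (simp del: fun_upd_apply)
  then show ?thesis unfolding dU_def gU_def by (simp add: DERIV_imp_deriv mult.assoc)
qed

lemma GW_eq:
  "i < K \<Longrightarrow> j < n1 \<Longrightarrow> GW \<Phi> n1 \<rho>w pw i j w u = dual_map \<rho>w pw {..<n1} (gW w u i) j"
  unfolding GW_def dual_map_def by (simp add: dW_Phi)

lemma GU_eq:
  assumes "0 < K" "pos u" "a < n1" "b < d"
  shows "GU \<Phi> n1 d \<rho>u pu a b w u
    = dual_map \<rho>u pu ({..<n1} \<times> {..<d}) (\<lambda>c. gU w u (fst c) (snd c)) (a, b)"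
  using assms unfolding GU_def dual_map_def
  by (simp add: dU_Phi sum.cartesian_product split_beta)

lemma gW_pos: "i < K \<Longrightarrow> 0 < gW w' u' i l"
  unfolding gW_def by (rule grad_pos) (auto simp: h_nonneg)

lemma gU_pos: "(\<And>r. r < K \<Longrightarrow> 0 \<le> w' r a) \<Longrightarrow> a < n1 \<Longrightarrow> b < d \<Longrightarrow> 0 < gU w' u' a b"
  unfolding gU_def by (rule grad_pos) (auto intro!: mult_nonneg_nonneg e_nonneg x_nonneg)

end

section \<open>The estimates at a point of B_{++}\<close>

locale one_hidden_layer_point = one_hidden_layer +
  fixes pw pu \<rho>w \<rho>u :: real and w u :: "nat \<Rightarrow> nat \<Rightarrow> real" and Cw Cu an :: real
  assumes pw: "1 < pw" and pu: "1 < pu" and \<rho>w: "0 < \<rho>w" and \<rho>u: "0 < \<rho>u"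
    and in_Bpp: "(w, u) \<in> Bpp K n1 d pw pu \<rho>w \<rho>u"
  defines "Cw \<equiv> \<rho>w * PsiA n1 \<alpha> (hconj pw) pu (\<lambda>_. 1) (\<rho>u * rhoX n d x pu)"
    and "Cu \<equiv> \<rho>w * PsiA n1 \<alpha> (hconj pw) pu \<alpha> (\<rho>u * rhoX n d x pu)"
    and "an \<equiv> Max ((\<lambda>l. \<bar>\<alpha> l\<bar>) ` {..<n1})"
begin

lemma w_pos: "r < K \<Longrightarrow> l < n1 \<Longrightarrow> 0 < w r l"
  using in_Bpp by (simp add: Bpp_def)

lemma u_pos: "pos u"
  using in_Bpp by (simp add: Bpp_def pos_def)

lemma w_nonneg: "r < K \<Longrightarrow> l < n1 \<Longrightarrow> 0 \<le> w r l"
  using w_pos by (simp add: less_imp_le)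

lemma u_nonneg: "l < n1 \<Longrightarrow> m < d \<Longrightarrow> 0 \<le> u l m"
  using u_pos by (simp add: pos_def less_imp_le)

lemma Cw_nonneg: "0 \<le> Cw"
  using \<rho>w by (simp add: Cw_def PsiA_def Let_def)

lemma Cu_nonneg: "0 \<le> Cu"
  using \<rho>w by (simp add: Cu_def PsiA_def Let_def)

lemma \<alpha>_le_an: "l < n1 \<Longrightarrow> \<alpha> l \<le> an"
  unfolding an_def by (rule order_trans[OF abs_ge_self]) (auto intro!: Max_ge)

lemma weighted_h_le_PsiA:
  assumes k: "k < K" and s: "s < n" and \<delta>: "\<And>l. l < n1 \<Longrightarrow> 0 \<le> \<delta> l"
  shows "(\<Sum>l<n1. w k l * (\<delta> l * h u s l)) \<le> \<rho>w * PsiA n1 \<alpha> (hconj pw) pu \<delta> (\<rho>u * rhoX n d x pu)"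
  unfolding h_def z_def
proof (rule weighted_sum_le_PsiA[OF pw pu])
  show "(\<Sum>m<d. \<bar>x s m\<bar> powr hconj pu) powr (1 / hconj pu) \<le> rhoX n d x pu"
    unfolding rhoX_def using s by (intro Max_ge) auto
qed (use in_Bpp k s \<rho>u \<delta> less_le_trans[OF zero_less_one \<alpha>_ge_1] w_pos u_pos x_nonneg
    in \<open>auto simp: Bpp_def pos_def less_imp_le\<close>)

lemma f_le_Cw: "k < K \<Longrightarrow> s < n \<Longrightarrow> f w u s k \<le> Cw"
  using weighted_h_le_PsiA[of k s "\<lambda>_. 1"] by (simp add: Cw_def f_def)

lemma weighted_\<alpha>h_le_Cu: "k < K \<Longrightarrow> s < n \<Longrightarrow> (\<Sum>l<n1. w k l * (\<alpha> l * h u s l)) \<le> Cu"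
  using weighted_h_le_PsiA[of k s \<alpha>] \<alpha>_ge_1 by (force simp: Cu_def)

lemma wdir_logit_deriv_bound:
  assumes "k < K" "s < n"
  shows "(\<Sum>l0<n1. \<bar>if r = k then h u s l0 else 0\<bar> * w k l0) \<le> Cw"
  using f_le_Cw[OF assms] Cw_nonneg by (cases "r = k") (simp_all add: f_def h_nonneg mult.commute)

lemma sum_e_x_u: "s < n \<Longrightarrow> l < n1 \<Longrightarrow> (\<Sum>m<d. e u s l * x s m * u l m) = \<alpha> l * h u s l"
  using e_mult_z[OF u_pos] by (simp add: z_def sum_distrib_left mult_ac)

lemma udir_h_deriv_bound:
  assumes s: "s < n" and l: "l < n1"
  shows "(\<Sum>c\<in>{..<n1} \<times> {..<d}. \<bar>if l = fst c then e u s (fst c) * x s (snd c) else 0\<bar> * u (fst c) (snd c))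
    \<le> an * h u s l"
proof -
  have "(\<Sum>c\<in>{..<n1} \<times> {..<d}. \<bar>if l = fst c then e u s (fst c) * x s (snd c) else 0\<bar> * u (fst c) (snd c))
      = (\<Sum>c\<in>{..<n1} \<times> {..<d}. if fst c = l then e u s l * x s (snd c) * u l (snd c) else 0)"
    using s e_nonneg[OF l] x_nonneg by (intro sum.cong) (auto simp: abs_mult)
  also have "\<dots> = \<alpha> l * h u s l"
    using s l sum_e_x_u sum_product_if_fst[of "{..<n1}" "{..<d}" l "\<lambda>m. e u s l * x s m * u l m"]
    by simp
  finally show ?thesis using \<alpha>_le_an[OF l] h_nonneg by (simp add: mult_right_mono)
qed

lemma udir_logit_deriv_bound:
  assumes r: "r < K" and s: "s < n"
  shows "(\<Sum>c\<in>{..<n1} \<times> {..<d}. \<bar>w r (fst c) * (e u s (fst c) * x s (snd c))\<bar> * u (fst c) (snd c)) \<le> Cu"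
proof -
  have "(\<Sum>c\<in>{..<n1} \<times> {..<d}. \<bar>w r (fst c) * (e u s (fst c) * x s (snd c))\<bar> * u (fst c) (snd c))
      = (\<Sum>c\<in>{..<n1} \<times> {..<d}. w r (fst c) * (e u s (fst c) * x s (snd c) * u (fst c) (snd c)))"
    using r s w_pos e_nonneg x_nonneg
    by (intro sum.cong) (auto simp: abs_mult abs_of_nonneg less_imp_le mult_ac)
  also have "\<dots> = (\<Sum>l<n1. \<Sum>m<d. w r l * (e u s l * x s m * u l m))"
    by (simp add: sum.cartesian_product split_beta)
  also have "\<dots> = (\<Sum>l<n1. w r l * (\<alpha> l * h u s l))"
    using s by (intro sum.cong) (simp_all add: sum_e_x_u flip: sum_distrib_left)
  finally show ?thesis using weighted_\<alpha>h_le_Cu[OF r s] by simp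
qed

lemma dW_GW_bound:
  assumes i: "i < K" and k: "k < K" and j: "j < n1"
  shows "(\<Sum>l<n1. \<bar>dW (GW \<Phi> n1 \<rho>w pw i j) w u k l\<bar> * w k l)
    \<le> Amat K pw pu Cw Cu an i k * GW \<Phi> n1 \<rho>w pw i j w u"
proof -
  define D where "D l0 l = (1 / real n) * (\<Sum>s<n. \<Sum>r\<in>{i}.
      cc_dir w u s (\<lambda>r. if r = k then h u s l0 else 0) r * h u s l + cc w u s r * 0)" for l0 l
  have "(\<Sum>l<n1. \<bar>dW (GW \<Phi> n1 \<rho>w pw i j) w u k l\<bar> * w k l)
      \<le> 2 * (hconj pw - 1) * (2 * Cw + 0) * dual_map \<rho>w pw {..<n1} (gW w u i) j"
    unfolding dW_def
  proof (rule dual_map_deriv_weighted_bound[where g="\<lambda>l0 t. gW (w(k := (w k)(l0 := t))) u i"])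
    fix l0 l assume "l0 \<in> {..<n1}" and "l \<in> {..<n1}"
    then have l0: "l0 < n1" by simp
    show "((\<lambda>t. gW (w(k := (w k)(l0 := t))) u i l) has_real_derivative D l0 l) (at (w k l0))"
      using grad_has_real_derivative[where R="{i}" and F'="\<lambda>s r. if r = k then h u s l0 else 0"
          and P="\<lambda>_ s _. h u s l" and P'="\<lambda>_ _. 0" and \<tau>="w k l0", OF _ f_wdir_has_real_derivative[OF l0, of w k u]] i
      by (simp add: gW_def D_def)
  next
    fix l assume "l \<in> {..<n1}"
    then show "(\<Sum>l0<n1. \<bar>D l0 l\<bar> * w k l0) \<le> (2 * Cw + 0) * gW w u i l"
      unfolding D_def gW_def using i k w_pos wdir_logit_deriv_bound Cw_nonneg
      by (intro grad_deriv_weighted_bound) (auto simp: h_nonneg less_imp_le)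
  qed (use j pw \<rho>w i k in \<open>auto simp: GW_eq gW_pos w_nonneg\<close>)
  then show ?thesis using i k j by (simp add: GW_eq Amat_def)
qed

lemma dU_GW_bound:
  assumes i: "i < K" and j: "j < n1"
  shows "(\<Sum>l<n1. \<Sum>m<d. \<bar>dU (GW \<Phi> n1 \<rho>w pw i j) w u l m\<bar> * u l m)
    \<le> Amat K pw pu Cw Cu an i K * GW \<Phi> n1 \<rho>w pw i j w u"
proof -
  define C where "C = {..<n1} \<times> {..<d}"
  define U where "U c t = u(fst c := (u (fst c))(snd c := t))" for c :: "nat \<times> nat" and t
  define F' where "F' c s r = w r (fst c) * (e u s (fst c) * x s (snd c))" for c :: "nat \<times> nat" and s r
  define H' where "H' c s l = (if l = fst c then e u s (fst c) * x s (snd c) else 0)"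
    for c :: "nat \<times> nat" and s l
  define D where "D c l = (1 / real n) * (\<Sum>s<n. \<Sum>r\<in>{i}.
      cc_dir w u s (F' c s) r * h u s l + cc w u s r * H' c s l)" for c l
  have "(\<Sum>c\<in>C. \<bar>dU (GW \<Phi> n1 \<rho>w pw i j) w u (fst c) (snd c)\<bar> * u (fst c) (snd c))
      \<le> 2 * (hconj pw - 1) * (2 * Cu + an) * dual_map \<rho>w pw {..<n1} (gW w u i) j"
    unfolding dU_def
  proof (rule dual_map_deriv_weighted_bound[where g="\<lambda>c t. gW w (U c t) i" and \<tau>="\<lambda>c. u (fst c) (snd c)"])
    fix c l assume c: "c \<in> C" and "l \<in> {..<n1}"
    have dF: "((\<lambda>t. f w (U c t) s r) has_real_derivative F' c s r) (at (u (fst c) (snd c)))"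
      if "s < n" for s r
      using f_udir_has_real_derivative[OF u_pos that] c by (auto simp: U_def F'_def C_def)
    have dH: "((\<lambda>t. h (U c t) s l) has_real_derivative H' c s l) (at (u (fst c) (snd c)))"
      if "s < n" for s
      using h_udir_has_real_derivative[OF u_pos that, of "fst c" "snd c" l] c
      by (auto simp: U_def H'_def C_def)
    show "((\<lambda>t. gW w (U c t) i l) has_real_derivative D c l) (at (u (fst c) (snd c)))"
      using grad_has_real_derivative[where R="{i}" and W="\<lambda>_. w" and U="U c" and F'="F' c"
          and P="\<lambda>t s _. h (U c t) s l" and P'="\<lambda>s _. H' c s l", OF _ dF dH] i
      by (simp add: gW_def D_def U_def)
  next
    fix l assume "l \<in> {..<n1}"
    then have l: "l < n1" by simp
    show "(\<Sum>c\<in>C. \<bar>D c l\<bar> * u (fst c) (snd c)) \<le> (2 * Cu + an) * gW w u i l"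
      unfolding D_def gW_def
    proof (rule grad_deriv_weighted_bound)
      show "(\<Sum>c\<in>C. \<bar>H' c s l\<bar> * u (fst c) (snd c)) \<le> an * h u s l" if "s < n" for s
        using udir_h_deriv_bound[OF that l] by (simp add: H'_def C_def)
    next
      show "(\<Sum>c\<in>C. \<bar>F' c s k\<bar> * u (fst c) (snd c)) \<le> Cu" if "s < n" "k < K" for s k
        using udir_logit_deriv_bound[OF that(2,1)] by (simp add: F'_def C_def)
    qed (use i Cu_nonneg \<alpha>_le_an[OF l] \<alpha>_ge_1[OF l] in \<open>auto simp: h_nonneg C_def u_nonneg\<close>)
  qed (use j pw \<rho>w i in \<open>auto simp: U_def C_def GW_eq gW_pos u_nonneg\<close>)
  also have "(\<Sum>c\<in>C. \<bar>dU (GW \<Phi> n1 \<rho>w pw i j) w u (fst c) (snd c)\<bar> * u (fst c) (snd c))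
      = (\<Sum>l<n1. \<Sum>m<d. \<bar>dU (GW \<Phi> n1 \<rho>w pw i j) w u l m\<bar> * u l m)"
    by (simp add: C_def sum.cartesian_product split_beta)
  finally show ?thesis using i j by (simp add: GW_eq Amat_def)
qed

lemma wdir_w_deriv_bound:
  assumes "s < n" "r < K" "k < K" "a < n1" "b < d"
  shows "(\<Sum>l0<n1. \<bar>if r = k \<and> a = l0 then e u s a * x s b else 0\<bar> * w k l0) \<le> 1 * (w r a * e u s a * x s b)"
proof -
  have "(\<Sum>l0<n1. \<bar>if r = k \<and> a = l0 then e u s a * x s b else 0\<bar> * w k l0)
      = (if r = k then \<bar>e u s a * x s b\<bar> * w k a else 0)"
    using assms(4) by (simp add: if_distrib[of "\<lambda>c. \<bar>c\<bar> * _"] sum.delta' cong: if_cong)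
  also have "\<dots> \<le> 1 * (w r a * e u s a * x s b)"
    using assms w_nonneg e_nonneg x_nonneg by (auto simp: abs_mult)
  finally show ?thesis .
qed

lemma dW_GU_bound:
  assumes k: "k < K" and a: "a < n1" and b: "b < d"
  shows "(\<Sum>l<n1. \<bar>dW (GU \<Phi> n1 d \<rho>u pu a b) w u k l\<bar> * w k l)
    \<le> Amat K pw pu Cw Cu an K k * GU \<Phi> n1 d \<rho>u pu a b w u"
proof -
  define I where "I = {..<n1} \<times> {..<d}"
  define W where "W l0 t = w(k := (w k)(l0 := t))" for l0 t
  define F' where "F' l0 s r = (if r = k then h u s l0 else 0)" for l0 s r
  define P' where "P' l0 p s r = (if r = k \<and> fst p = l0 then e u s (fst p) * x s (snd p) else 0)"
    for l0 :: nat and p :: "nat \<times> nat" and s r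
  define D where "D l0 p = (1 / real n) * (\<Sum>s<n. \<Sum>r<K. cc_dir w u s (F' l0 s) r
      * (w r (fst p) * e u s (fst p) * x s (snd p)) + cc w u s r * P' l0 p s r)" for l0 p
  have K: "0 < K" using k by simp
  have "(\<Sum>l<n1. \<bar>dW (GU \<Phi> n1 d \<rho>u pu a b) w u k l\<bar> * w k l)
      \<le> 2 * (hconj pu - 1) * (2 * Cw + 1) * dual_map \<rho>u pu I (\<lambda>p. gU w u (fst p) (snd p)) (a, b)"
    unfolding dW_def
  proof (rule dual_map_deriv_weighted_bound[where g="\<lambda>l0 t p. gU (W l0 t) u (fst p) (snd p)"
        and \<tau>="\<lambda>l0. w k l0"])
    fix l0 p assume "l0 \<in> {..<n1}" "p \<in> I"
    then have l0: "l0 < n1" by simp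
    have dF: "((\<lambda>t. f (W l0 t) u s r) has_real_derivative F' l0 s r) (at (w k l0))" for s r
      unfolding W_def F'_def by (rule f_wdir_has_real_derivative[OF l0])
    have dP: "((\<lambda>t. W l0 t r (fst p) * e u s (fst p) * x s (snd p)) has_real_derivative P' l0 p s r)
        (at (w k l0))" for s r
      by (cases "r = k"; cases "fst p = l0") (auto simp: W_def P'_def intro!: derivative_eq_intros)
    show "((\<lambda>t. gU (W l0 t) u (fst p) (snd p)) has_real_derivative D l0 p) (at (w k l0))"
      using grad_has_real_derivative[where R="{..<K}" and W="W l0" and U="\<lambda>_. u" and F'="F' l0"
          and P="\<lambda>t s r. W l0 t r (fst p) * e u s (fst p) * x s (snd p)" and P'="P' l0 p"
          and \<tau>="w k l0", OF _ dF dP]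
      by (simp add: gU_def D_def W_def)
  next
    fix p assume "p \<in> I"
    then have p: "fst p < n1" "snd p < d" by (auto simp: I_def)
    show "(\<Sum>l0<n1. \<bar>D l0 p\<bar> * w k l0) \<le> (2 * Cw + 1) * gU w u (fst p) (snd p)"
      unfolding D_def gU_def
    proof (rule grad_deriv_weighted_bound)
      show "(\<Sum>l0<n1. \<bar>P' l0 p s r\<bar> * w k l0) \<le> 1 * (w r (fst p) * e u s (fst p) * x s (snd p))"
        if "s < n" "r \<in> {..<K}" for s r
        using wdir_w_deriv_bound[of s r k "fst p" "snd p"] that k p by (simp add: P'_def)
    next
      show "(\<Sum>l0<n1. \<bar>F' l0 s r\<bar> * w k l0) \<le> Cw" if "s < n" "r < K" for s r
        using wdir_logit_deriv_bound[OF k that(1)] by (simp add: F'_def)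
    qed (use k p Cw_nonneg in \<open>auto simp: w_nonneg e_nonneg x_nonneg\<close>)
  qed (use a b k pu \<rho>u in \<open>auto simp: I_def W_def GU_eq[OF K u_pos] gU_pos w_nonneg\<close>)
  then show ?thesis using k a b by (simp add: GU_eq[OF K u_pos] I_def Amat_def)
qed

lemma sum_udir_e_deriv:
  assumes s: "s < n" and a: "a < n1"
  shows "(\<Sum>c\<in>{..<n1} \<times> {..<d}.
      \<bar>if a = fst c then \<alpha> a * ((\<alpha> a - 1) * z u s a powr (\<alpha> a - 2) * x s (snd c)) else 0\<bar>
        * u (fst c) (snd c)) = (\<alpha> a - 1) * e u s a"
proof -
  define E where "E = \<alpha> a * ((\<alpha> a - 1) * z u s a powr (\<alpha> a - 2))"
  have E: "0 \<le> E" using \<alpha>_ge_1[OF a] by (simp add: E_def)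
  have "(\<Sum>c\<in>{..<n1} \<times> {..<d}.
      \<bar>if a = fst c then \<alpha> a * ((\<alpha> a - 1) * z u s a powr (\<alpha> a - 2) * x s (snd c)) else 0\<bar>
        * u (fst c) (snd c))
      = (\<Sum>c\<in>{..<n1} \<times> {..<d}. if fst c = a then E * x s (snd c) * u a (snd c) else 0)"
    using s E x_nonneg \<alpha>_ge_1[OF a] by (intro sum.cong) (auto simp: E_def abs_mult mult_ac)
  also have "\<dots> = E * z u s a"
    using a sum_product_if_fst[of "{..<n1}" "{..<d}" a "\<lambda>m. E * x s m * u a m"]
    by (simp add: z_def sum_distrib_left mult_ac)
  also have "\<dots> = (\<alpha> a - 1) * e u s a"
    using e_deriv_mult_z[OF u_pos s a] by (simp add: E_def)
  finally show ?thesis .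
qed

lemma udir_e_deriv_bound:
  assumes s: "s < n" and r: "r < K" and a: "a < n1" and b: "b < d"
  shows "(\<Sum>c\<in>{..<n1} \<times> {..<d}. \<bar>w r a
      * (if a = fst c then \<alpha> a * ((\<alpha> a - 1) * z u s a powr (\<alpha> a - 2) * x s (snd c)) else 0)
      * x s b\<bar> * u (fst c) (snd c)) \<le> (an - 1) * (w r a * e u s a * x s b)"
proof -
  have "(\<Sum>c\<in>{..<n1} \<times> {..<d}. \<bar>w r a
      * (if a = fst c then \<alpha> a * ((\<alpha> a - 1) * z u s a powr (\<alpha> a - 2) * x s (snd c)) else 0)
      * x s b\<bar> * u (fst c) (snd c)) = w r a * x s b * (\<Sum>c\<in>{..<n1} \<times> {..<d}.
      \<bar>if a = fst c then \<alpha> a * ((\<alpha> a - 1) * z u s a powr (\<alpha> a - 2) * x s (snd c)) else 0\<bar>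
        * u (fst c) (snd c))"
    using w_nonneg[OF r a] x_nonneg[OF s b] by (simp add: abs_mult sum_distrib_left mult_ac)
  also have "\<dots> = (\<alpha> a - 1) * (w r a * e u s a * x s b)"
    using sum_udir_e_deriv[OF s a] by simp
  also have "\<dots> \<le> (an - 1) * (w r a * e u s a * x s b)"
    using \<alpha>_le_an[OF a] w_nonneg[OF r a] e_nonneg[OF a] x_nonneg[OF s b]
    by (intro mult_right_mono) auto
  finally show ?thesis .
qed

lemma GU_udir_eventually_eq:
  assumes K: "0 < K" and a: "a < n1" and b: "b < d" and c: "fst c < n1" "snd c < d"
  shows "\<forall>\<^sub>F t in nhds (u (fst c) (snd c)). GU \<Phi> n1 d \<rho>u pu a b w (u(fst c := (u (fst c))(snd c := t)))
    = dual_map \<rho>u pu ({..<n1} \<times> {..<d})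
        (\<lambda>p. gU w (u(fst c := (u (fst c))(snd c := t))) (fst p) (snd p)) (a, b)"
proof -
  have "\<forall>\<^sub>F t in nhds (u (fst c) (snd c)). t \<in> {0<..}"
    using c u_pos by (intro eventually_nhds_in_open) (auto simp: pos_def)
  then show ?thesis
    by eventually_elim (use c u_pos in \<open>auto simp: GU_eq[OF K _ a b] pos_def\<close>)
qed

lemma dU_GU_bound:
  assumes K: "0 < K" and a: "a < n1" and b: "b < d"
  shows "(\<Sum>l<n1. \<Sum>m<d. \<bar>dU (GU \<Phi> n1 d \<rho>u pu a b) w u l m\<bar> * u l m)
    \<le> Amat K pw pu Cw Cu an K K * GU \<Phi> n1 d \<rho>u pu a b w u"
proof -
  define I where "I = {..<n1} \<times> {..<d}"
  define U where "U c t = u(fst c := (u (fst c))(snd c := t))" for c :: "nat \<times> nat" and t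
  define F' where "F' c s r = w r (fst c) * (e u s (fst c) * x s (snd c))" for c :: "nat \<times> nat" and s r
  define E' where "E' c s l = (if l = fst c then \<alpha> l * ((\<alpha> l - 1) * z u s l powr (\<alpha> l - 2) * x s (snd c))
      else 0)" for c :: "nat \<times> nat" and s l
  define P' where "P' c p s r = w r (fst p) * E' c s (fst p) * x s (snd p)" for c p :: "nat \<times> nat" and s r
  define D where "D c p = (1 / real n) * (\<Sum>s<n. \<Sum>r<K. cc_dir w u s (F' c s) r
      * (w r (fst p) * e u s (fst p) * x s (snd p)) + cc w u s r * P' c p s r)" for c p
  have an: "1 \<le> an" using \<alpha>_le_an[OF a] \<alpha>_ge_1[OF a] by simp
  have "(\<Sum>c\<in>I. \<bar>dU (GU \<Phi> n1 d \<rho>u pu a b) w u (fst c) (snd c)\<bar> * u (fst c) (snd c))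
      \<le> 2 * (hconj pu - 1) * (2 * Cu + (an - 1)) * dual_map \<rho>u pu I (\<lambda>p. gU w u (fst p) (snd p)) (a, b)"
    unfolding dU_def
  proof (rule dual_map_deriv_weighted_bound[where g="\<lambda>c t p. gU w (U c t) (fst p) (snd p)"
        and \<tau>="\<lambda>c. u (fst c) (snd c)"])
    fix c p assume c: "c \<in> I" and "p \<in> I"
    have dF: "((\<lambda>t. f w (U c t) s r) has_real_derivative F' c s r) (at (u (fst c) (snd c)))"
      if "s < n" for s r
      using f_udir_has_real_derivative[OF u_pos that, of "fst c" "snd c" w r] c
      by (auto simp: U_def F'_def I_def)
    have dP: "((\<lambda>t. w r (fst p) * e (U c t) s (fst p) * x s (snd p)) has_real_derivative P' c p s r)
        (at (u (fst c) (snd c)))" if "s < n" for s r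
    proof -
      have "((\<lambda>t. e (U c t) s (fst p)) has_real_derivative E' c s (fst p)) (at (u (fst c) (snd c)))"
        using e_udir_has_real_derivative[OF u_pos that, of "fst c" "snd c" "fst p"] c
        by (auto simp: U_def E'_def I_def)
      from DERIV_cmult_right[OF DERIV_cmult[OF this, of "w r (fst p)"], of "x s (snd p)"]
      show ?thesis by (simp add: P'_def)
    qed
    show "((\<lambda>t. gU w (U c t) (fst p) (snd p)) has_real_derivative D c p) (at (u (fst c) (snd c)))"
      using grad_has_real_derivative[where R="{..<K}" and W="\<lambda>_. w" and U="U c" and F'="F' c"
          and P="\<lambda>t s r. w r (fst p) * e (U c t) s (fst p) * x s (snd p)" and P'="P' c p", OF _ dF dP]
      by (simp add: gU_def D_def U_def)
  next
    fix p assume "p \<in> I"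
    then have p: "fst p < n1" "snd p < d" by (auto simp: I_def)
    show "(\<Sum>c\<in>I. \<bar>D c p\<bar> * u (fst c) (snd c)) \<le> (2 * Cu + (an - 1)) * gU w u (fst p) (snd p)"
      unfolding D_def gU_def
    proof (rule grad_deriv_weighted_bound)
      show "(\<Sum>c\<in>I. \<bar>P' c p s r\<bar> * u (fst c) (snd c)) \<le> (an - 1) * (w r (fst p) * e u s (fst p) * x s (snd p))"
        if "s < n" "r \<in> {..<K}" for s r
        using udir_e_deriv_bound[of s r "fst p" "snd p"] that p by (simp add: P'_def E'_def I_def)
      show "(\<Sum>c\<in>I. \<bar>F' c s r\<bar> * u (fst c) (snd c)) \<le> Cu" if "s < n" "r < K" for s r
        using udir_logit_deriv_bound[OF that(2,1)] by (simp add: F'_def I_def)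
    qed (use p an Cu_nonneg in \<open>auto simp: I_def u_nonneg w_nonneg e_nonneg x_nonneg\<close>)
  qed (use a b pu \<rho>u GU_udir_eventually_eq[OF K a b]
      in \<open>auto simp: I_def U_def GU_eq[OF K u_pos] gU_pos w_nonneg u_nonneg\<close>)
  also have "(\<Sum>c\<in>I. \<bar>dU (GU \<Phi> n1 d \<rho>u pu a b) w u (fst c) (snd c)\<bar> * u (fst c) (snd c))
      = (\<Sum>l<n1. \<Sum>m<d. \<bar>dU (GU \<Phi> n1 d \<rho>u pu a b) w u l m\<bar> * u l m)"
    by (simp add: I_def sum.cartesian_product split_beta)
  finally show ?thesis using a b by (simp add: GU_eq[OF K u_pos] I_def Amat_def add_diff_eq)
qed

end

theorem mainTheorem12:
  fixes K n1 d n :: nat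
    and x :: "nat \<Rightarrow> nat \<Rightarrow> real" and y :: "nat \<Rightarrow> nat"
    and \<alpha> :: "nat \<Rightarrow> real" and \<epsilon> pw pu \<rho>w \<rho>u :: real
    and w u :: "nat \<Rightarrow> nat \<Rightarrow> real"
  assumes "0 < n" "0 < n1" "0 < d"
    and "\<forall>i<n. \<forall>m<d. 0 \<le> x i m"
    and "\<forall>i<n. y i < K"
    and "\<forall>l<n1. 1 \<le> \<alpha> l"
    and "0 < \<epsilon>"
    and "1 < pw" "1 < pu" "0 < \<rho>w" "0 < \<rho>u"
    and "(w, u) \<in> Bpp K n1 d pw pu \<rho>w \<rho>u"
  defines "\<Phi> \<equiv> PhiObj K n1 d n x y \<alpha> \<epsilon>"
    and "Cw \<equiv> \<rho>w * PsiA n1 \<alpha> (hconj pw) pu (\<lambda>_. 1) (\<rho>u * rhoX n d x pu)"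
    and "Cu \<equiv> \<rho>w * PsiA n1 \<alpha> (hconj pw) pu \<alpha> (\<rho>u * rhoX n d x pu)"
    and "an \<equiv> Max ((\<lambda>l. \<bar>\<alpha> l\<bar>) ` {..<n1})"
  shows "\<forall>i<K. \<forall>k<K. \<forall>j<n1. \<forall>a<n1. \<forall>b<d.
     (\<Sum>l<n1. \<bar>dW (GW \<Phi> n1 \<rho>w pw i j) w u k l\<bar> * w k l)
        \<le> Amat K pw pu Cw Cu an i k * GW \<Phi> n1 \<rho>w pw i j w u \<and>
     (\<Sum>l<n1. \<Sum>m<d. \<bar>dU (GW \<Phi> n1 \<rho>w pw i j) w u l m\<bar> * u l m)
        \<le> Amat K pw pu Cw Cu an i K * GW \<Phi> n1 \<rho>w pw i j w u \<and>
     (\<Sum>l<n1. \<bar>dW (GU \<Phi> n1 d \<rho>u pu a b) w u k l\<bar> * w k l)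
        \<le> Amat K pw pu Cw Cu an K k * GU \<Phi> n1 d \<rho>u pu a b w u \<and>
     (\<Sum>l<n1. \<Sum>m<d. \<bar>dU (GU \<Phi> n1 d \<rho>u pu a b) w u l m\<bar> * u l m)
        \<le> Amat K pw pu Cw Cu an K K * GU \<Phi> n1 d \<rho>u pu a b w u"
proof -
  interpret one_hidden_layer_point K n1 d n x y \<alpha> \<epsilon> pw pu \<rho>w \<rho>u w u Cw Cu an
    using assms(1,4-12) unfolding Cw_def Cu_def an_def by unfold_locales auto
  show ?thesis
    unfolding \<Phi>_def by (intro allI impI conjI dW_GW_bound dU_GW_bound dW_GU_bound dU_GU_bound) auto
qed

end
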